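(* Let $((f_t),(g_t),(h_t))$ be a $W_{1,+}$-geodesic on $G$ with associated function $m$, and define $P_t(x)=\frac{1}{m(x)}\sum_{\gamma\in\mathrm{SE}\Gamma_{2,x}}C_\gamma(t)$ and $Q_t(x)=\frac{1}{m(x)}\sum_{\gamma\in\mathrm{SE}\Gamma_{1,x}}C_\gamma(t)$. Then for all $t$: (1) $f_t(x_0)=m(x_0)P_t(x_0)Q_t(x_0)$ for $x_0\in G$; (2) $g_t(x_0x_1)=m(x_0,x_1)P_t(x_0)Q_t(x_1)$ for $(x_0x_1)\in E(G)$; (3) $h_t(x_0x_1x_2)=m(x_0,x_1,x_2)P_t(x_0)Q_t(x_2)$ for $(x_0x_1x_2)\in T(G)$.
   Context: $G$ is a connected, locally finite graph with graph distance $d$; geodesics are paths of adjacent vertices $\gamma(0),\dots,\gamma(n)$ with $n=d(\gamma(0),\gamma(n))$, $e_0(\gamma)=\gamma(0)$, $e_1(\gamma)=\gamma(n)$. For finitely supported probability distributions $f_0,f_1$: $\Pi_1(f_0,f_1)$ = couplings minimizing $\sum d(x,y)\pi(x,y)$ (minimum $W_1$), $\mathcal{C}(f_0,f_1)=\{(x,y):\pi(x,y)>0$ for some $\pi\in\Pi_1\}$; $W_1$-orientation: adjacent $x,y$ get $x\to y$ iff some geodesic $\gamma$ with $(e_0(\gamma),e_1(\gamma))\in\mathcal{C}(f_0,f_1)$ has $\gamma(k)=x,\gamma(k+1)=y$. Oriented paths: $\gamma(i)\to\gamma(i+1)$; $x\le y$ iff an oriented path (possibly of length $0$) goes from $x$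 to $y$; $\gamma_i=\gamma(i)$. $E(G)=\{(xy):x\to y\}$, $T(G)$ triples $x_0\to x_1\to x_2$, $\mathcal{F}(x)=\{y:x\to y\}$, $\mathcal{E}(x)=\{y:y\to x\}$; $\nabla g(x_1)=\sum_{\mathcal{F}(x_1)}g(x_1x_2)-\sum_{\mathcal{E}(x_1)}g(x_0x_1)$, $\nabla h(x_1x_2)=\sum_{x_3\in\mathcal{F}(x_2)}h(x_1x_2x_3)-\sum_{x_0\in\mathcal{E}(x_1)}h(x_0x_1x_2)$. $W_{1,+}$-geodesic: a family $(f_t)_{t\in[0,1]}$ from $f_0$ to $f_1$ with $W_1(f_s,f_t)=|t-s|W_1(f_0,f_1)$, differentiable in $t$, with $g_t$ on $E(G)$, $h_t$ on $T(G)$, $\partial_tf_t=-\nabla g_t$, $\partial_tg_t=-\nabla h_t$, $g_t>0$, $f_t(x_1)h_t(x_0x_1x_2)=g_t(x_0x_1)g_t(x_1x_2)$. $C_\gamma(t)=f_t(\gamma_0)$ if $L(\gamma)=0$, $g_t(\gamma_0\gamma_1)$ if $L(\gamma)=1$, $\prod_{i=0}^{n-1}g_t(\gamma_i\gamma_{i+1})/\prod_{j=1}^{n-1}f_t(\gamma_j)$ if $n\ge2$. $\mathcal{A}=\{x:\mathcal{E}(x)=\emptyset\}$, $\mathcal{B}=\{x:\mathcal{F}(x)=\emptyset\}$; extremal oriented paths start in $\mathcal{A}$, end in $\mathcal{B}$; $\mathrm{SE}\Gamma_{1,x}$: oriented paths from a vertex of $\mathcal{A}$ to $x$; $\mathrm{SE}\Gamma_{2,x}$: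 oriented paths from $x$ to a vertex of $\mathcal{B}$. For $z_1\le\cdots\le z_p$, $m(z_1,\dots,z_p)=\sum_\gamma C_\gamma(0)$ over extremal oriented paths $\gamma$ with indices $k_1\le\dots\le k_p$, $\gamma(k_i)=z_i$ (for extremal $\gamma$, $C_\gamma(t)$ is independent of $t$). *)

theory Defs
  imports "HOL-Analysis.Analysis"
begin

text \<open>A graph is given by an adjacency relation on the vertex type (vertex set = UNIV).
Paths are nonempty vertex lists; a path gamma(0),...,gamma(n) is a list of length n+1.\<close>

definition walk :: "('v \<Rightarrow> 'v \<Rightarrow> bool) \<Rightarrow> 'v list \<Rightarrow> bool" where
  "walk adj \<gamma> \<longleftrightarrow> \<gamma> \<noteq> [] \<and> (\<forall>i. Suc i < length \<gamma> \<longrightarrow> adj (\<gamma> ! i) (\<gamma> ! Suc i))"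

definition conn_locfin_graph :: "('v \<Rightarrow> 'v \<Rightarrow> bool) \<Rightarrow> bool" where
  "conn_locfin_graph adj \<longleftrightarrow>
     (\<forall>x y. adj x y \<longrightarrow> adj y x) \<and> (\<forall>x. \<not> adj x x) \<and>
     (\<forall>x. finite {y. adj x y}) \<and>
     (\<forall>x y. \<exists>\<gamma>. walk adj \<gamma> \<and> hd \<gamma> = x \<and> last \<gamma> = y)"

definition gdist :: "('v \<Rightarrow> 'v \<Rightarrow> bool) \<Rightarrow> 'v \<Rightarrow> 'v \<Rightarrow> nat" where
  "gdist adj x y = (LEAST n. \<exists>\<gamma>. walk adj \<gamma> \<and> hd \<gamma> = x \<and> last \<gamma> = y \<and> length \<gamma> = Suc n)"

definition geodesic :: "('v \<Rightarrow> 'v \<Rightarrow> bool) \<Rightarrow> 'v list \<Rightarrow> bool" where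
  "geodesic adj \<gamma> \<longleftrightarrow> walk adj \<gamma> \<and> length \<gamma> = Suc (gdist adj (hd \<gamma>) (last \<gamma>))"

definition fs_prob :: "('v \<Rightarrow> real) \<Rightarrow> bool" where
  "fs_prob f \<longleftrightarrow> (\<forall>x. 0 \<le> f x) \<and> finite {x. f x \<noteq> 0} \<and> (\<Sum>x\<in>{x. f x \<noteq> 0}. f x) = 1"

definition coupling :: "('v \<Rightarrow> real) \<Rightarrow> ('v \<Rightarrow> real) \<Rightarrow> ('v \<Rightarrow> 'v \<Rightarrow> real) \<Rightarrow> bool" where
  "coupling f0 f1 \<pi> \<longleftrightarrow>
     (\<forall>x y. 0 \<le> \<pi> x y) \<and> (\<forall>x y. \<pi> x y \<noteq> 0 \<longrightarrow> f0 x \<noteq> 0 \<and> f1 y \<noteq> 0) \<and>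
     (\<forall>x. (\<Sum>y\<in>{y. f1 y \<noteq> 0}. \<pi> x y) = f0 x) \<and>
     (\<forall>y. (\<Sum>x\<in>{x. f0 x \<noteq> 0}. \<pi> x y) = f1 y)"

definition tcost :: "('v \<Rightarrow> 'v \<Rightarrow> bool) \<Rightarrow> ('v \<Rightarrow> real) \<Rightarrow> ('v \<Rightarrow> real) \<Rightarrow> ('v \<Rightarrow> 'v \<Rightarrow> real) \<Rightarrow> real" where
  "tcost adj f0 f1 \<pi> = (\<Sum>(x,y)\<in>{x. f0 x \<noteq> 0} \<times> {y. f1 y \<noteq> 0}. real (gdist adj x y) * \<pi> x y)"

definition W1 :: "('v \<Rightarrow> 'v \<Rightarrow> bool) \<Rightarrow> ('v \<Rightarrow> real) \<Rightarrow> ('v \<Rightarrow> real) \<Rightarrow> real" where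
  "W1 adj f0 f1 = Inf (tcost adj f0 f1 ` {\<pi>. coupling f0 f1 \<pi>})"

definition Pi1 :: "('v \<Rightarrow> 'v \<Rightarrow> bool) \<Rightarrow> ('v \<Rightarrow> real) \<Rightarrow> ('v \<Rightarrow> real) \<Rightarrow> ('v \<Rightarrow> 'v \<Rightarrow> real) set" where
  "Pi1 adj f0 f1 = {\<pi>. coupling f0 f1 \<pi> \<and> tcost adj f0 f1 \<pi> = W1 adj f0 f1}"

definition Cset :: "('v \<Rightarrow> 'v \<Rightarrow> bool) \<Rightarrow> ('v \<Rightarrow> real) \<Rightarrow> ('v \<Rightarrow> real) \<Rightarrow> ('v \<times> 'v) set" where
  "Cset adj f0 f1 = {(x,y). \<exists>\<pi>\<in>Pi1 adj f0 f1. \<pi> x y > 0}"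

definition W1_arrow :: "('v \<Rightarrow> 'v \<Rightarrow> bool) \<Rightarrow> ('v \<Rightarrow> real) \<Rightarrow> ('v \<Rightarrow> real) \<Rightarrow> 'v \<Rightarrow> 'v \<Rightarrow> bool" where
  "W1_arrow adj f0 f1 x y \<longleftrightarrow> adj x y \<and>
     (\<exists>\<gamma> k. geodesic adj \<gamma> \<and> (hd \<gamma>, last \<gamma>) \<in> Cset adj f0 f1 \<and>
            Suc k < length \<gamma> \<and> \<gamma> ! k = x \<and> \<gamma> ! Suc k = y)"

definition opath :: "('v \<Rightarrow> 'v \<Rightarrow> bool) \<Rightarrow> 'v list \<Rightarrow> bool" where
  "opath ar \<gamma> \<longleftrightarrow> \<gamma> \<noteq> [] \<and> (\<forall>i. Suc i < length \<gamma> \<longrightarrow> ar (\<gamma> ! i) (\<gamma> ! Suc i))"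

definition Fset :: "('v \<Rightarrow> 'v \<Rightarrow> bool) \<Rightarrow> 'v \<Rightarrow> 'v set" where
  "Fset ar x = {y. ar x y}"

definition Eset :: "('v \<Rightarrow> 'v \<Rightarrow> bool) \<Rightarrow> 'v \<Rightarrow> 'v set" where
  "Eset ar x = {y. ar y x}"

definition Aset :: "('v \<Rightarrow> 'v \<Rightarrow> bool) \<Rightarrow> 'v set" where
  "Aset ar = {x. Eset ar x = {}}"

definition Bset :: "('v \<Rightarrow> 'v \<Rightarrow> bool) \<Rightarrow> 'v set" where
  "Bset ar = {x. Fset ar x = {}}"

definition extremal :: "('v \<Rightarrow> 'v \<Rightarrow> bool) \<Rightarrow> 'v list \<Rightarrow> bool" where
  "extremal ar \<gamma> \<longleftrightarrow> opath ar \<gamma> \<and> hd \<gamma> \<in> Aset ar \<and> last \<gamma> \<in> Bset ar"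

definition SE1 :: "('v \<Rightarrow> 'v \<Rightarrow> bool) \<Rightarrow> 'v \<Rightarrow> 'v list set" where
  "SE1 ar x = {\<gamma>. opath ar \<gamma> \<and> hd \<gamma> \<in> Aset ar \<and> last \<gamma> = x}"

definition SE2 :: "('v \<Rightarrow> 'v \<Rightarrow> bool) \<Rightarrow> 'v \<Rightarrow> 'v list set" where
  "SE2 ar x = {\<gamma>. opath ar \<gamma> \<and> hd \<gamma> = x \<and> last \<gamma> \<in> Bset ar}"

definition div_v :: "('v \<Rightarrow> 'v \<Rightarrow> bool) \<Rightarrow> ('v \<Rightarrow> 'v \<Rightarrow> real) \<Rightarrow> 'v \<Rightarrow> real" where
  "div_v ar g x1 = (\<Sum>x2\<in>Fset ar x1. g x1 x2) - (\<Sum>x0\<in>Eset ar x1. g x0 x1)"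

definition div_e :: "('v \<Rightarrow> 'v \<Rightarrow> bool) \<Rightarrow> ('v \<Rightarrow> 'v \<Rightarrow> 'v \<Rightarrow> real) \<Rightarrow> 'v \<Rightarrow> 'v \<Rightarrow> real" where
  "div_e ar h x1 x2 = (\<Sum>x3\<in>Fset ar x2. h x1 x2 x3) - (\<Sum>x0\<in>Eset ar x1. h x0 x1 x2)"

text \<open>C_gamma for given f_t, g_t; L(gamma) = length gamma - 1.\<close>
definition Cpath :: "('v \<Rightarrow> real) \<Rightarrow> ('v \<Rightarrow> 'v \<Rightarrow> real) \<Rightarrow> 'v list \<Rightarrow> real" where
  "Cpath f g \<gamma> =
     (if length \<gamma> = 1 then f (\<gamma> ! 0)
      else if length \<gamma> = 2 then g (\<gamma> ! 0) (\<gamma> ! 1)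
      else (\<Prod>i<length \<gamma> - 1. g (\<gamma> ! i) (\<gamma> ! Suc i)) / (\<Prod>j\<in>{1..<length \<gamma> - 1}. f (\<gamma> ! j)))"

definition mfun :: "('v \<Rightarrow> 'v \<Rightarrow> bool) \<Rightarrow> ('v \<Rightarrow> real) \<Rightarrow> ('v \<Rightarrow> 'v \<Rightarrow> real) \<Rightarrow> 'v list \<Rightarrow> real" where
  "mfun ar f0 g0 zs =
     (\<Sum>\<gamma>\<in>{\<gamma>. extremal ar \<gamma> \<and>
              (\<exists>ks. length ks = length zs \<and> sorted ks \<and>
                    (\<forall>i<length zs. ks ! i < length \<gamma> \<and> \<gamma> ! (ks ! i) = zs ! i))}.
        Cpath f0 g0 \<gamma>)"

definition W1plus_geodesic ::
  "('v \<Rightarrow> 'v \<Rightarrow> bool) \<Rightarrow> (real \<Rightarrow> 'v \<Rightarrow> real) \<Rightarrow> (real \<Rightarrow> 'v \<Rightarrow> 'v \<Rightarrow> real)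
    \<Rightarrow> (real \<Rightarrow> 'v \<Rightarrow> 'v \<Rightarrow> 'v \<Rightarrow> real) \<Rightarrow> bool" where
  "W1plus_geodesic adj f g h \<longleftrightarrow>
     (let ar = W1_arrow adj (f 0) (f 1) in
     (\<forall>t\<in>{0..1}. fs_prob (f t)) \<and>
     (\<forall>s\<in>{0..1}. \<forall>t\<in>{0..1}. W1 adj (f s) (f t) = \<bar>t - s\<bar> * W1 adj (f 0) (f 1)) \<and>
     (\<forall>t\<in>{0..1}. \<forall>x. ((\<lambda>\<tau>. f \<tau> x) has_real_derivative (- div_v ar (g t) x)) (at t within {0..1})) \<and>
     (\<forall>t\<in>{0..1}. \<forall>x y. ar x y \<longrightarrow>
        ((\<lambda>\<tau>. g \<tau> x y) has_real_derivative (- div_e ar (h t) x y)) (at t within {0..1})) \<and>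
     (\<forall>t\<in>{0..1}. \<forall>x y. ar x y \<longrightarrow> g t x y > 0) \<and>
     (\<forall>t\<in>{0..1}. \<forall>x0 x1 x2. ar x0 x1 \<and> ar x1 x2 \<longrightarrow>
        f t x1 * h t x0 x1 x2 = g t x0 x1 * g t x1 x2))"

end

theory Submission
  imports Defs
begin

text \<open>
  Two facts drive the proof. First, every path oriented by the W1-orientation is a geodesic: each
  of its edges lies on a geodesic between a pair charged by an optimal coupling, and if the ends
  of the path were closer than its length, one optimal coupling charging all these pairs could be
  improved by shifting mass cyclically among them (cyclical monotonicity). Hence oriented paths
  are distinct and chordless, and there are finitely many of them.
  Second, along a W_{1,+}-geodesic the logarithmic derivative of the path weight C_\<gamma> is the
  inflow rate at the start of \<gamma> minus the outflow rate at its end, so C_\<gamma> is constant on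
  extremal paths and m does not depend on t. An extremal path through a segment \<sigma> splits
  uniquely into a path from a source to the start of \<sigma>, the segment itself, and a path from its
  end to a sink, and C is multiplicative under this splitting once the masses at the junctions are
  divided out. Summing over the splittings expresses m(\<sigma>) as C_\<sigma>(t) times weights attached to
  the two ends of \<sigma>; comparing with m at single vertices yields the three factorizations.
\<close>

section \<open>Oriented paths and graph distance\<close>

lemma walk_eq_opath: "walk = opath"
  by (auto simp: fun_eq_iff walk_def opath_def)

lemma opath_Nil [simp]: "\<not> opath ar []"
  by (simp add: opath_def)

lemma opath_nonempty: "opath ar \<gamma> \<Longrightarrow> \<gamma> \<noteq> []"
  by auto

lemma opath_singleton [simp]: "opath ar [x]"
  by (simp add: opath_def)

lemma opath_Cons_Cons [simp]: "opath ar (x # y # r) \<longleftrightarrow> ar x y \<and> opath ar (y # r)"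
  by (auto simp: opath_def less_Suc_eq_0_disj)

lemma opath_nth: "opath ar \<gamma> \<Longrightarrow> Suc i < length \<gamma> \<Longrightarrow> ar (\<gamma> ! i) (\<gamma> ! Suc i)"
  by (simp add: opath_def)

lemma opath_append:
  "p \<noteq> [] \<Longrightarrow> q \<noteq> [] \<Longrightarrow> opath ar (p @ q) \<longleftrightarrow> opath ar p \<and> opath ar q \<and> ar (last p) (hd q)"
proof (induction p rule: induct_list012)
  case (2 x)
  then show ?case by (cases q) auto
qed auto

lemma opath_join:
  assumes "opath ar p" "opath ar q" "last p = hd q"
  shows "opath ar (p @ tl q)"
proof (cases "tl q")
  case (Cons a r)
  with assms(2) have "opath ar (hd q # a # r)" by (metis list.collapse opath_Nil)
  moreover have "p \<noteq> []" using assms(1) by auto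
  ultimately show ?thesis using assms Cons by (simp add: opath_append)
qed (use assms in simp)

lemma last_append_tl: "last p = hd q \<Longrightarrow> p \<noteq> [] \<Longrightarrow> q \<noteq> [] \<Longrightarrow> last (p @ tl q) = last q"
  by (cases q) auto

lemma opath_take: "opath ar \<gamma> \<Longrightarrow> 0 < n \<Longrightarrow> opath ar (take n \<gamma>)"
  by (auto simp: opath_def)

lemma opath_drop: "opath ar \<gamma> \<Longrightarrow> n < length \<gamma> \<Longrightarrow> opath ar (drop n \<gamma>)"
  by (auto simp: opath_def)

lemma opath_slice:
  assumes "opath ar \<gamma>" "i \<le> j" "j < length \<gamma>"
  defines "\<sigma> \<equiv> drop i (take (Suc j) \<gamma>)"
  shows "opath ar \<sigma>" "hd \<sigma> = \<gamma> ! i" "last \<sigma> = \<gamma> ! j" "length \<sigma> = Suc (j - i)"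
  using assms opath_drop[OF opath_take[OF assms(1)], of "Suc j" i]
  by (auto simp: hd_drop_conv_nth last_conv_nth)

lemma gdist_le_walk:
  assumes "walk adj w" "hd w = x" "last w = y"
  shows "gdist adj x y \<le> length w - 1"
proof -
  from assms have "length w = Suc (length w - 1)" by (cases w) (auto simp: walk_def)
  with assms show ?thesis unfolding gdist_def by (intro Least_le) blast
qed

lemma gdist_walk_exists:
  assumes "conn_locfin_graph adj"
  obtains w where "walk adj w" "hd w = x" "last w = y" "length w = Suc (gdist adj x y)"
proof -
  obtain w where "walk adj w" "hd w = x" "last w = y"
    using assms unfolding conn_locfin_graph_def by metis
  then have "\<exists>n w. walk adj w \<and> hd w = x \<and> last w = y \<and> length w = Suc n"
    by (intro exI[of _ "length w - 1"] exI[of _ w]) (auto simp: walk_def)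
  then have "\<exists>w. walk adj w \<and> hd w = x \<and> last w = y \<and> length w = Suc (gdist adj x y)"
    unfolding gdist_def by (rule LeastI_ex)
  with that show ?thesis by blast
qed

lemma gdist_refl [simp]: "gdist adj x x = 0"
  using gdist_le_walk[of adj "[x]" x x] by (simp add: walk_eq_opath)

lemma gdist_le_1_if_adj: "adj x y \<Longrightarrow> gdist adj x y \<le> 1"
  using gdist_le_walk[of adj "[x, y]" x y] by (simp add: walk_eq_opath)

lemma gdist_triangle:
  assumes "conn_locfin_graph adj"
  shows "gdist adj x z \<le> gdist adj x y + gdist adj y z"
proof -
  obtain p where p: "walk adj p" "hd p = x" "last p = y" "length p = Suc (gdist adj x y)"
    using gdist_walk_exists[OF assms] .
  obtain q where q: "walk adj q" "hd q = y" "last q = z" "length q = Suc (gdist adj y z)"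
    using gdist_walk_exists[OF assms] .
  have "p \<noteq> []" "q \<noteq> []" using p(1) q(1) by (auto simp: walk_def)
  moreover have "last (p @ tl q) = z"
    using last_append_tl[of p q] \<open>p \<noteq> []\<close> \<open>q \<noteq> []\<close> p(3) q(2,3) by simp
  ultimately have "walk adj (p @ tl q)" "hd (p @ tl q) = x" "last (p @ tl q) = z"
    using p q by (simp_all add: walk_eq_opath opath_join)
  from gdist_le_walk[OF this] p q show ?thesis by simp
qed

lemma geodesic_split:
  assumes "geodesic adj \<gamma>" "Suc k < length \<gamma>"
  shows "gdist adj (hd \<gamma>) (\<gamma> ! k) + 1 + gdist adj (\<gamma> ! Suc k) (last \<gamma>) \<le> gdist adj (hd \<gamma>) (last \<gamma>)"
proof -
  have w: "opath adj \<gamma>" using assms(1) by (simp add: geodesic_def walk_eq_opath)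
  have "gdist adj (hd \<gamma>) (\<gamma> ! k) \<le> length (take (Suc k) \<gamma>) - 1"
    using assms(2) w opath_slice[OF w, of 0 k]
    by (intro gdist_le_walk) (auto simp: walk_eq_opath)
  moreover have "gdist adj (\<gamma> ! Suc k) (last \<gamma>) \<le> length (drop (Suc k) \<gamma>) - 1"
    using assms(2) opath_drop[OF w]
    by (intro gdist_le_walk) (auto simp: walk_eq_opath hd_drop_conv_nth)
  ultimately show ?thesis using assms unfolding geodesic_def by auto
qed

lemma finite_gdist_ball:
  assumes conn: "conn_locfin_graph adj"
  shows "finite {z. gdist adj a z \<le> r}"
proof (induction r)
  case 0
  have "{z. gdist adj a z \<le> 0} \<subseteq> {a}"
  proof
    fix z assume "z \<in> {z. gdist adj a z \<le> 0}"
    moreover obtain w where "walk adj w" "hd w = a" "last w = z" "length w = Suc (gdist adj a z)"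
      using gdist_walk_exists[OF conn] .
    ultimately show "z \<in> {a}" by (cases w) auto
  qed
  then show ?case by (rule finite_subset) simp
next
  case (Suc r)
  let ?B = "{z. gdist adj a z \<le> r}"
  have "{z. gdist adj a z \<le> Suc r} \<subseteq> ?B \<union> (\<Union>u\<in>?B. {z. adj u z})"
  proof
    fix z assume z: "z \<in> {z. gdist adj a z \<le> Suc r}"
    show "z \<in> ?B \<union> (\<Union>u\<in>?B. {z. adj u z})"
    proof (cases "gdist adj a z \<le> r")
      case False
      obtain w where w: "walk adj w" "hd w = a" "last w = z" "length w = Suc (gdist adj a z)"
        using gdist_walk_exists[OF conn] .
      with False z have len: "length w = Suc (Suc r)" by simp
      define u where "u = butlast w"
      have u: "w = u @ [z]" "u \<noteq> []"
        using w(3) len unfolding u_def by (auto simp flip: length_0_conv)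
      with w have "walk adj u" "hd u = a" "adj (last u) z"
        by (auto simp: walk_eq_opath opath_append)
      moreover have "gdist adj a (last u) \<le> r"
        using gdist_le_walk[OF \<open>walk adj u\<close> \<open>hd u = a\<close>, of "last u"] u len by simp
      ultimately show ?thesis by blast
    qed simp
  qed
  moreover have "finite (\<Union>u\<in>?B. {z. adj u z})"
    using Suc.IH conn by (auto simp: conn_locfin_graph_def)
  ultimately show ?case using Suc.IH by (meson finite_UnI finite_subset)
qed

section \<open>Optimal couplings\<close>

lemma coupling_support: "coupling f0 f1 \<pi> \<Longrightarrow> \<pi> x y \<noteq> 0 \<Longrightarrow> f0 x \<noteq> 0 \<and> f1 y \<noteq> 0"
  unfolding coupling_def by blast

lemma coupling_nonneg: "coupling f0 f1 \<pi> \<Longrightarrow> 0 \<le> \<pi> x y"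
  unfolding coupling_def by blast

lemma tcost_nonneg: "coupling f0 f1 \<pi> \<Longrightarrow> 0 \<le> tcost adj f0 f1 \<pi>"
  unfolding tcost_def by (intro sum_nonneg) (auto simp: coupling_nonneg)

lemma W1_le_tcost: "coupling f0 f1 \<pi> \<Longrightarrow> W1 adj f0 f1 \<le> tcost adj f0 f1 \<pi>"
  unfolding W1_def by (rule cInf_lower) (auto intro!: bdd_belowI[of _ 0] tcost_nonneg)

lemma coupling_mean:
  fixes n :: nat
  assumes "0 < n" "\<And>i. i < n \<Longrightarrow> coupling f0 f1 (\<pi> i)"
  shows "coupling f0 f1 (\<lambda>x y. (\<Sum>i<n. \<pi> i x y) / real n)"
  unfolding coupling_def
proof (intro conjI allI)
  let ?S0 = "{x. f0 x \<noteq> 0}" and ?S1 = "{y. f1 y \<noteq> 0}"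
  have mean_const: "(\<Sum>i<n. c) / real n = c" for c :: real
    using assms(1) by simp
  fix x y
  show "0 \<le> (\<Sum>i<n. \<pi> i x y) / real n"
    using coupling_nonneg[OF assms(2)] by (intro divide_nonneg_nonneg sum_nonneg) auto
  show "(\<Sum>i<n. \<pi> i x y) / real n \<noteq> 0 \<longrightarrow> f0 x \<noteq> 0 \<and> f1 y \<noteq> 0"
  proof
    assume "(\<Sum>i<n. \<pi> i x y) / real n \<noteq> 0"
    then have "(\<Sum>i<n. \<pi> i x y) \<noteq> 0" by auto
    then obtain i where "i \<in> {..<n}" "\<pi> i x y \<noteq> 0"
      by (rule sum.not_neutral_contains_not_neutral)
    then show "f0 x \<noteq> 0 \<and> f1 y \<noteq> 0" using coupling_support[OF assms(2)] by simp
  qed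
  have "(\<Sum>y\<in>?S1. (\<Sum>i<n. \<pi> i x y) / real n) = (\<Sum>i<n. \<Sum>y\<in>?S1. \<pi> i x y) / real n"
    unfolding sum_divide_distrib[symmetric] by (subst sum.swap) (rule refl)
  also have "\<dots> = (\<Sum>i<n. f0 x) / real n"
    using assms(2) by (simp add: coupling_def)
  finally show "(\<Sum>y\<in>?S1. (\<Sum>i<n. \<pi> i x y) / real n) = f0 x" by (simp only: mean_const)
  have "(\<Sum>x\<in>?S0. (\<Sum>i<n. \<pi> i x y) / real n) = (\<Sum>i<n. \<Sum>x\<in>?S0. \<pi> i x y) / real n"
    unfolding sum_divide_distrib[symmetric] by (subst sum.swap) (rule refl)
  also have "\<dots> = (\<Sum>i<n. f1 y) / real n"
    using assms(2) by (simp add: coupling_def)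
  finally show "(\<Sum>x\<in>?S0. (\<Sum>i<n. \<pi> i x y) / real n) = f1 y" by (simp only: mean_const)
qed

lemma tcost_mean:
  "tcost adj f0 f1 (\<lambda>x y. (\<Sum>i<n. \<pi> i x y) / real n) = (\<Sum>i<n. tcost adj f0 f1 (\<pi> i)) / real n"
  unfolding tcost_def split_def sum_distrib_left sum_divide_distrib[symmetric] times_divide_eq_right
  by (subst sum.swap) (rule refl)

lemma Pi1_mean:
  fixes n :: nat
  assumes "0 < n" "\<And>i. i < n \<Longrightarrow> \<pi> i \<in> Pi1 adj f0 f1"
  shows "(\<lambda>x y. (\<Sum>i<n. \<pi> i x y) / real n) \<in> Pi1 adj f0 f1"
proof -
  have "(\<Sum>i<n. tcost adj f0 f1 (\<pi> i)) = (\<Sum>i<n. W1 adj f0 f1)"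
    using assms(2) by (intro sum.cong) (auto simp: Pi1_def)
  with assms show ?thesis
    by (simp add: Pi1_def coupling_mean tcost_mean)
qed

lemma Cset_common_optimal_coupling:
  fixes n :: nat
  assumes "0 < n" "\<And>i. i < n \<Longrightarrow> (A i, B i) \<in> Cset adj f0 f1"
  obtains \<pi> where "\<pi> \<in> Pi1 adj f0 f1" "\<And>i. i < n \<Longrightarrow> 0 < \<pi> (A i) (B i)"
proof -
  have "\<forall>i\<in>{..<n}. \<exists>\<pi>. \<pi> \<in> Pi1 adj f0 f1 \<and> 0 < \<pi> (A i) (B i)"
    using assms(2) by (auto simp: Cset_def)
  then obtain \<rho> where \<rho>: "\<forall>i\<in>{..<n}. \<rho> i \<in> Pi1 adj f0 f1 \<and> 0 < \<rho> i (A i) (B i)"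
    by (rule bchoice[THEN exE])
  have "0 < (\<Sum>j<n. \<rho> j (A i) (B i)) / real n" if "i < n" for i
  proof -
    have "\<rho> i (A i) (B i) \<le> (\<Sum>j<n. \<rho> j (A i) (B i))"
      using that \<rho> by (intro member_le_sum) (auto simp: Pi1_def intro: coupling_nonneg)
    moreover have "0 < \<rho> i (A i) (B i)" using \<rho> that by simp
    ultimately show ?thesis using assms(1) by (intro divide_pos_pos) auto
  qed
  moreover have "(\<lambda>x y. (\<Sum>i<n. \<rho> i x y) / real n) \<in> Pi1 adj f0 f1"
    using \<rho> by (intro Pi1_mean[OF assms(1)]) simp
  ultimately show ?thesis using that by blast
qed

definition pair_multiplicity :: "nat \<Rightarrow> (nat \<Rightarrow> 'a) \<Rightarrow> (nat \<Rightarrow> 'b) \<Rightarrow> 'a \<times> 'b \<Rightarrow> real" where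
  "pair_multiplicity n A B q = (\<Sum>i<n. if q = (A i, B i) then 1 else 0)"

lemma pair_multiplicity_nonneg: "0 \<le> pair_multiplicity n A B q"
  unfolding pair_multiplicity_def by (intro sum_nonneg) auto

lemma pair_multiplicity_le: "pair_multiplicity n A B q \<le> real n"
  unfolding pair_multiplicity_def using sum_mono[of "{..<n}" _ "\<lambda>_. 1 :: real"] by fastforce

lemma pair_multiplicity_eq_0: "(\<And>i. i < n \<Longrightarrow> q \<noteq> (A i, B i)) \<Longrightarrow> pair_multiplicity n A B q = 0"
  unfolding pair_multiplicity_def by (intro sum.neutral) auto

lemma sum_pair_multiplicity_snd:
  assumes "finite T" "\<And>i. i < n \<Longrightarrow> B i \<in> T"
  shows "(\<Sum>y\<in>T. pair_multiplicity n A B (x, y)) = (\<Sum>i<n. if A i = x then 1 else 0)"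
  unfolding pair_multiplicity_def
  by (subst sum.swap) (intro sum.cong refl, use assms in \<open>auto simp: sum.delta' if_distrib\<close>)

lemma sum_pair_multiplicity_fst:
  assumes "finite S" "\<And>i. i < n \<Longrightarrow> A i \<in> S"
  shows "(\<Sum>x\<in>S. pair_multiplicity n A B (x, y)) = (\<Sum>i<n. if B i = y then 1 else 0)"
  unfolding pair_multiplicity_def
  by (subst sum.swap) (intro sum.cong refl, use assms in \<open>auto simp: sum.delta' if_distrib\<close>)

lemma sum_weighted_pair_multiplicity:
  assumes "finite P" "\<And>i. i < n \<Longrightarrow> (A i, B i) \<in> P"
  shows "(\<Sum>q\<in>P. w q * pair_multiplicity n A B q) = (\<Sum>i<n. w (A i, B i))"
  unfolding pair_multiplicity_def sum_distrib_left
  by (subst sum.swap) (intro sum.cong refl, use assms in \<open>auto simp: sum.delta' if_distrib cong: if_cong\<close>)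

lemma cycle_perturbation_nonneg:
  fixes n :: nat and \<delta> :: real
  assumes "\<And>x y. 0 \<le> \<pi> x y" "0 \<le> \<delta>" "\<And>i. i < n \<Longrightarrow> real n * \<delta> \<le> \<pi> (A i) (B i)"
  shows "0 \<le> \<pi> x y + \<delta> * (pair_multiplicity n A' B (x, y) - pair_multiplicity n A B (x, y))"
proof -
  have "0 \<le> \<delta> * pair_multiplicity n A' B (x, y)"
    using assms(2) pair_multiplicity_nonneg by (rule mult_nonneg_nonneg)
  moreover have "\<delta> * pair_multiplicity n A B (x, y) \<le> \<pi> x y"
  proof (cases "\<exists>i<n. (x, y) = (A i, B i)")
    case True
    then obtain i where "i < n" "x = A i" "y = B i" by blast
    with assms(2,3) pair_multiplicity_le[of n A B "(x, y)"] show ?thesis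
      by (metis mult.commute mult_left_mono order_trans)
  next
    case False
    then show ?thesis using assms(1) by (simp add: pair_multiplicity_eq_0)
  qed
  ultimately show ?thesis unfolding right_diff_distrib by linarith
qed

text \<open>The perturbation moves mass \<delta> from each pair (A i, B i) to (A (p i), B i); since p permutes
  the indices, both marginals are preserved.\<close>

lemma coupling_cycle_perturbation:
  fixes n :: nat and \<delta> :: real
  assumes fin: "finite {x. f0 x \<noteq> 0}" "finite {y. f1 y \<noteq> 0}" and cpl: "coupling f0 f1 \<pi>"
    and pos: "\<And>i. i < n \<Longrightarrow> 0 < \<pi> (A i) (B i)"
    and \<delta>: "0 \<le> \<delta>" "\<And>i. i < n \<Longrightarrow> real n * \<delta> \<le> \<pi> (A i) (B i)"
    and p: "bij_betw p {..<n} {..<n}"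
  shows "coupling f0 f1 (\<lambda>x y. \<pi> x y + \<delta> * (pair_multiplicity n (A \<circ> p) B (x, y) - pair_multiplicity n A B (x, y)))"
    (is "coupling f0 f1 ?\<pi>'")
proof -
  let ?S0 = "{x. f0 x \<noteq> 0}" and ?S1 = "{y. f1 y \<noteq> 0}"
  let ?new = "pair_multiplicity n (A \<circ> p) B" and ?old = "pair_multiplicity n A B"
  have AB: "A i \<in> ?S0" "B i \<in> ?S1" if "i < n" for i
    using coupling_support[OF cpl, of "A i" "B i"] pos[OF that] by auto
  have p_range: "p i < n" if "i < n" for i
    using p that by (auto simp: bij_betw_def)
  have nonneg: "0 \<le> ?\<pi>' x y" for x y
    using coupling_nonneg[OF cpl] \<delta> by (rule cycle_perturbation_nonneg)
  have support: "f0 x \<noteq> 0 \<and> f1 y \<noteq> 0" if "?\<pi>' x y \<noteq> 0" for x y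
  proof (cases "\<pi> x y = 0")
    case True
    with that have "?new (x, y) \<noteq> 0 \<or> ?old (x, y) \<noteq> 0" by auto
    then obtain i where "i < n" "(x, y) = (A (p i), B i) \<or> (x, y) = (A i, B i)"
      using pair_multiplicity_eq_0[of n "(x, y)"] by (metis comp_apply)
    then show ?thesis using AB p_range by auto
  qed (use coupling_support[OF cpl] in blast)
  have count_A: "(\<Sum>i<n. if (A \<circ> p) i = x then 1 else 0) = (\<Sum>i<n. if A i = x then 1 else (0 :: real))" for x
    using sum.reindex_bij_betw[OF p, of "\<lambda>i. if A i = x then 1 else (0 :: real)"] by simp
  have "(\<Sum>y\<in>?S1. ?\<pi>' x y) = f0 x" for x
  proof -
    have "(\<Sum>y\<in>?S1. ?new (x, y)) = (\<Sum>y\<in>?S1. ?old (x, y))"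
      using fin AB p_range count_A by (simp add: sum_pair_multiplicity_snd)
    then show ?thesis using cpl
      by (simp add: sum.distrib sum_subtractf coupling_def flip: sum_distrib_left)
  qed
  moreover have "(\<Sum>x\<in>?S0. ?\<pi>' x y) = f1 y" for y
  proof -
    have "(\<Sum>x\<in>?S0. ?new (x, y)) = (\<Sum>x\<in>?S0. ?old (x, y))"
      using fin AB p_range by (simp add: sum_pair_multiplicity_fst)
    then show ?thesis using cpl
      by (simp add: sum.distrib sum_subtractf coupling_def flip: sum_distrib_left)
  qed
  ultimately show ?thesis unfolding coupling_def using nonneg support by blast
qed

lemma tcost_cycle_perturbation:
  fixes n :: nat and \<delta> :: real
  assumes "finite {x. f0 x \<noteq> 0}" "finite {y. f1 y \<noteq> 0}"
    and AB: "\<And>i. i < n \<Longrightarrow> f0 (A i) \<noteq> 0 \<and> f1 (B i) \<noteq> 0" and p: "\<And>i. i < n \<Longrightarrow> p i < n"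
  shows "tcost adj f0 f1 (\<lambda>x y. \<pi> x y + \<delta> * (pair_multiplicity n (A \<circ> p) B (x, y) - pair_multiplicity n A B (x, y)))
    = tcost adj f0 f1 \<pi> + \<delta> * ((\<Sum>i<n. real (gdist adj (A (p i)) (B i))) - (\<Sum>i<n. real (gdist adj (A i) (B i))))"
proof -
  let ?P = "{x. f0 x \<noteq> 0} \<times> {y. f1 y \<noteq> 0}" and ?d = "\<lambda>q. real (gdist adj (fst q) (snd q))"
  let ?new = "pair_multiplicity n (A \<circ> p) B" and ?old = "pair_multiplicity n A B"
  have fin: "finite ?P" using assms(1,2) by simp
  have new: "(\<Sum>q\<in>?P. ?d q * ?new q) = (\<Sum>i<n. real (gdist adj (A (p i)) (B i)))"
    using sum_weighted_pair_multiplicity[OF fin, of n "A \<circ> p" B ?d] AB p by simp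
  have old: "(\<Sum>q\<in>?P. ?d q * ?old q) = (\<Sum>i<n. real (gdist adj (A i) (B i)))"
    using sum_weighted_pair_multiplicity[OF fin, of n A B ?d] AB by simp
  have "?d q * (\<pi> (fst q) (snd q) + \<delta> * (?new q - ?old q))
      = ?d q * \<pi> (fst q) (snd q) + (\<delta> * (?d q * ?new q) - \<delta> * (?d q * ?old q))" for q
    by (simp add: algebra_simps)
  then show ?thesis
    unfolding tcost_def split_def
    by (simp only: prod.collapse sum.distrib sum_subtractf new old right_diff_distrib flip: sum_distrib_left)
qed

lemma bij_betw_Suc_mod: "bij_betw (\<lambda>i. Suc i mod n) {..<n} {..<n}"
proof -
  have "inj_on (\<lambda>i. Suc i mod n) {..<n}"
    by (auto simp: inj_on_def mod_Suc split: if_splits)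
  moreover have "(\<lambda>i. Suc i mod n) ` {..<n} \<subseteq> {..<n}"
    by auto
  ultimately show ?thesis
    by (simp add: bij_betw_def endo_inj_surj)
qed

lemma Pi1_cyclically_monotone:
  fixes n :: nat
  assumes fs: "fs_prob f0" "fs_prob f1" and opt: "\<pi> \<in> Pi1 adj f0 f1"
    and pos: "\<And>i. i < n \<Longrightarrow> 0 < \<pi> (A i) (B i)" and p: "bij_betw p {..<n} {..<n}"
  shows "(\<Sum>i<n. gdist adj (A i) (B i)) \<le> (\<Sum>i<n. gdist adj (A (p i)) (B i))"
proof (cases "n = 0")
  case False
  have fin: "finite {x. f0 x \<noteq> 0}" "finite {y. f1 y \<noteq> 0}"
    using fs by (simp_all add: fs_prob_def)
  have cpl: "coupling f0 f1 \<pi>" and cost: "tcost adj f0 f1 \<pi> = W1 adj f0 f1"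
    using opt by (simp_all add: Pi1_def)
  have AB: "f0 (A i) \<noteq> 0 \<and> f1 (B i) \<noteq> 0" if "i < n" for i
    using coupling_support[OF cpl, of "A i" "B i"] pos[OF that] by simp
  have p_range: "p i < n" if "i < n" for i
    using p that by (auto simp: bij_betw_def)
  define \<delta> where "\<delta> = Min ((\<lambda>i. \<pi> (A i) (B i)) ` {..<n}) / real n"
  have "0 < Min ((\<lambda>i. \<pi> (A i) (B i)) ` {..<n})"
    using False pos by (subst Min_gr_iff) auto
  then have \<delta>_pos: "0 < \<delta>" using False by (simp add: \<delta>_def)
  have \<delta>_le: "real n * \<delta> \<le> \<pi> (A i) (B i)" if "i < n" for i
    using False that by (simp add: \<delta>_def)
  let ?\<pi>' = "\<lambda>x y. \<pi> x y + \<delta> * (pair_multiplicity n (A \<circ> p) B (x, y) - pair_multiplicity n A B (x, y))"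
  have "coupling f0 f1 ?\<pi>'"
    using coupling_cycle_perturbation[OF fin cpl pos _ \<delta>_le p] \<delta>_pos by simp
  then have "W1 adj f0 f1 \<le> tcost adj f0 f1 ?\<pi>'"
    by (rule W1_le_tcost)
  also have "\<dots> = W1 adj f0 f1 + \<delta> * ((\<Sum>i<n. real (gdist adj (A (p i)) (B i))) - (\<Sum>i<n. real (gdist adj (A i) (B i))))"
    using tcost_cycle_perturbation[OF fin AB p_range] cost by simp
  finally have "0 \<le> (\<Sum>i<n. real (gdist adj (A (p i)) (B i))) - (\<Sum>i<n. real (gdist adj (A i) (B i)))"
    using \<delta>_pos by (simp add: zero_le_mult_iff)
  then show ?thesis by (simp flip: of_nat_sum)
qed simp

lemma gdist_cycle_chain:
  fixes n :: nat and z :: "nat \<Rightarrow> 'v"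
  assumes conn: "conn_locfin_graph adj" and "0 < n"
    and edge: "\<And>i. i < n \<Longrightarrow> gdist adj (A i) (z i) + 1 + gdist adj (z (Suc i)) (B i) \<le> gdist adj (A i) (B i)"
  shows "(\<Sum>i<n. gdist adj (A (Suc i mod n)) (B i)) + n \<le> (\<Sum>i<n. gdist adj (A i) (B i)) + gdist adj (z 0) (z n)"
proof -
  let ?D = "gdist adj" and ?s = "\<lambda>i. Suc i mod n"
  \<comment> \<open>route each term through z (Suc i mod n) and z (Suc i); the middle pieces telescope\<close>
  have "(\<Sum>i<n. ?D (A (?s i)) (B i))
      \<le> (\<Sum>i<n. ?D (A (?s i)) (z (?s i)) + ?D (z (?s i)) (z (Suc i)) + ?D (z (Suc i)) (B i))"
    using gdist_triangle[OF conn] by (intro sum_mono) (meson add_mono order_trans order_refl)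
  also have "\<dots> = (\<Sum>i<n. ?D (A i) (z i)) + ?D (z 0) (z n) + (\<Sum>i<n. ?D (z (Suc i)) (B i))"
  proof -
    have "(\<Sum>i<n. ?D (A (?s i)) (z (?s i))) = (\<Sum>i<n. ?D (A i) (z i))"
      using sum.reindex_bij_betw[OF bij_betw_Suc_mod] .
    moreover have "(\<Sum>i<n. ?D (z (?s i)) (z (Suc i))) = ?D (z 0) (z n)"
      using \<open>0 < n\<close> by (cases n) (simp_all add: sum.lessThan_Suc)
    ultimately show ?thesis by (simp add: sum.distrib)
  qed
  moreover have "(\<Sum>i<n. ?D (A i) (z i) + 1 + ?D (z (Suc i)) (B i)) \<le> (\<Sum>i<n. ?D (A i) (B i))"
    using edge by (intro sum_mono) simp
  moreover have "(\<Sum>i<n. ?D (A i) (z i) + 1 + ?D (z (Suc i)) (B i))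
      = (\<Sum>i<n. ?D (A i) (z i)) + n + (\<Sum>i<n. ?D (z (Suc i)) (B i))"
    unfolding sum.distrib by simp
  ultimately show ?thesis by linarith
qed

lemma W1_arrow_witness:
  assumes "W1_arrow adj f0 f1 x y"
  obtains a b where "(a, b) \<in> Cset adj f0 f1" "gdist adj a x + 1 + gdist adj y b \<le> gdist adj a b"
proof -
  obtain \<gamma> k where "geodesic adj \<gamma>" "(hd \<gamma>, last \<gamma>) \<in> Cset adj f0 f1" "Suc k < length \<gamma>"
    "\<gamma> ! k = x" "\<gamma> ! Suc k = y"
    using assms unfolding W1_arrow_def by blast
  with geodesic_split show ?thesis by (intro that[of "hd \<gamma>" "last \<gamma>"]) auto
qed

locale W1_transport =
  fixes adj :: "'v \<Rightarrow> 'v \<Rightarrow> bool" and f0 f1 :: "'v \<Rightarrow> real"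
  assumes conn: "conn_locfin_graph adj" and fs0: "fs_prob f0" and fs1: "fs_prob f1"
begin

lemma opath_length_le_gdist:
  assumes "opath (W1_arrow adj f0 f1) \<gamma>"
  shows "length \<gamma> - 1 \<le> gdist adj (hd \<gamma>) (last \<gamma>)"
proof -
  define n where "n = length \<gamma> - 1"
  from assms have len: "length \<gamma> = Suc n" by (cases \<gamma>) (auto simp: n_def)
  have "\<forall>i\<in>{..<n}. \<exists>q. q \<in> Cset adj f0 f1 \<and>
      gdist adj (fst q) (\<gamma> ! i) + 1 + gdist adj (\<gamma> ! Suc i) (snd q) \<le> gdist adj (fst q) (snd q)"
  proof
    fix i assume "i \<in> {..<n}"
    with len have "W1_arrow adj f0 f1 (\<gamma> ! i) (\<gamma> ! Suc i)" using opath_nth[OF assms, of i] by simp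
    then obtain a b where "(a, b) \<in> Cset adj f0 f1" "gdist adj a (\<gamma> ! i) + 1 + gdist adj (\<gamma> ! Suc i) b \<le> gdist adj a b"
      by (rule W1_arrow_witness)
    then show "\<exists>q. q \<in> Cset adj f0 f1 \<and>
        gdist adj (fst q) (\<gamma> ! i) + 1 + gdist adj (\<gamma> ! Suc i) (snd q) \<le> gdist adj (fst q) (snd q)"
      by (intro exI[of _ "(a, b)"]) simp
  qed
  then obtain Q where Q: "\<forall>i\<in>{..<n}. Q i \<in> Cset adj f0 f1 \<and>
      gdist adj (fst (Q i)) (\<gamma> ! i) + 1 + gdist adj (\<gamma> ! Suc i) (snd (Q i)) \<le> gdist adj (fst (Q i)) (snd (Q i))"
    by (rule bchoice[THEN exE])
  define A B where "A = fst \<circ> Q" and "B = snd \<circ> Q"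
  show ?thesis
  proof (cases "n = 0")
    case False
    then obtain \<pi> where \<pi>: "\<pi> \<in> Pi1 adj f0 f1" "\<And>i. i < n \<Longrightarrow> 0 < \<pi> (A i) (B i)"
      using Cset_common_optimal_coupling[of n A B adj f0 f1] Q by (auto simp: A_def B_def)
    have "(\<Sum>i<n. gdist adj (A i) (B i)) \<le> (\<Sum>i<n. gdist adj (A (Suc i mod n)) (B i))"
      using Pi1_cyclically_monotone[OF fs0 fs1 \<pi> bij_betw_Suc_mod] .
    moreover have "(\<Sum>i<n. gdist adj (A (Suc i mod n)) (B i)) + n
        \<le> (\<Sum>i<n. gdist adj (A i) (B i)) + gdist adj (\<gamma> ! 0) (\<gamma> ! n)"
      using False Q by (intro gdist_cycle_chain[OF conn]) (auto simp: A_def B_def)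
    ultimately have "n \<le> gdist adj (\<gamma> ! 0) (\<gamma> ! n)" by linarith
    moreover have "\<gamma> \<noteq> []" using len by auto
    then have "hd \<gamma> = \<gamma> ! 0" "last \<gamma> = \<gamma> ! n" "length \<gamma> - 1 = n"
      using len by (simp_all add: hd_conv_nth last_conv_nth)
    ultimately show ?thesis by simp
  qed (simp add: n_def)
qed

lemma opath_nth_dist_le_gdist:
  assumes "opath (W1_arrow adj f0 f1) \<gamma>" "i \<le> j" "j < length \<gamma>"
  shows "j - i \<le> gdist adj (\<gamma> ! i) (\<gamma> ! j)"
  using opath_length_le_gdist[OF opath_slice(1)[OF assms]] opath_slice(2-4)[OF assms] by simp

lemma opath_distinct:
  assumes "opath (W1_arrow adj f0 f1) \<gamma>"
  shows "distinct \<gamma>"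
  unfolding distinct_conv_nth
proof (intro allI impI)
  fix i j assume ij: "i < length \<gamma>" "j < length \<gamma>" "i \<noteq> j"
  have "\<gamma> ! i \<noteq> \<gamma> ! j" if "i < j" "j < length \<gamma>" for i j
    using opath_nth_dist_le_gdist[OF assms, of i j] that by auto
  with ij show "\<gamma> ! i \<noteq> \<gamma> ! j" by (metis linorder_neqE_nat)
qed

lemma opath_chordless:
  assumes "opath (W1_arrow adj f0 f1) \<gamma>" "i \<le> j" "j < length \<gamma>" "W1_arrow adj f0 f1 (\<gamma> ! i) (\<gamma> ! j)"
  shows "j = Suc i"
proof -
  have "adj (\<gamma> ! i) (\<gamma> ! j)" using assms(4) by (simp add: W1_arrow_def)
  moreover have "\<not> adj x x" for x using conn by (simp add: conn_locfin_graph_def)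
  ultimately have "i \<noteq> j" by blast
  have "gdist adj (\<gamma> ! i) (\<gamma> ! j) \<le> 1"
    using \<open>adj (\<gamma> ! i) (\<gamma> ! j)\<close> by (rule gdist_le_1_if_adj)
  with \<open>i \<noteq> j\<close> opath_nth_dist_le_gdist[OF assms(1-3)] assms(2) show ?thesis by linarith
qed

lemma finite_W1_arrow_vertices: "finite {x. \<exists>y. W1_arrow adj f0 f1 x y \<or> W1_arrow adj f0 f1 y x}"
proof -
  let ?U = "\<Union>q\<in>{x. f0 x \<noteq> 0} \<times> {y. f1 y \<noteq> 0}. {z. gdist adj (fst q) z \<le> gdist adj (fst q) (snd q)}"
  have "x \<in> ?U \<and> y \<in> ?U" if arr: "W1_arrow adj f0 f1 x y" for x y
  proof -
    obtain a b where ab: "(a, b) \<in> Cset adj f0 f1" "gdist adj a x + 1 + gdist adj y b \<le> gdist adj a b"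
      by (rule W1_arrow_witness[OF arr])
    from ab(1) obtain \<pi> where "coupling f0 f1 \<pi>" "0 < \<pi> a b"
      by (auto simp: Cset_def Pi1_def)
    then have "f0 a \<noteq> 0" "f1 b \<noteq> 0"
      using coupling_support[of f0 f1 \<pi> a b] by auto
    moreover have "gdist adj a y \<le> gdist adj a x + 1"
      using gdist_triangle[OF conn, of a y x] gdist_le_1_if_adj[of adj x y] arr by (simp add: W1_arrow_def)
    ultimately show ?thesis using ab(2) by (intro conjI UN_I[of "(a, b)"]) auto
  qed
  then have "{x. \<exists>y. W1_arrow adj f0 f1 x y \<or> W1_arrow adj f0 f1 y x} \<subseteq> ?U" by blast
  moreover have "finite ?U"
    using fs0 fs1 finite_gdist_ball[OF conn] by (auto simp: fs_prob_def)
  ultimately show ?thesis by (rule finite_subset)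
qed

end

section \<open>Path weights and their evolution\<close>

lemma Cpath_singleton [simp]: "Cpath F G [x] = F x"
  by (simp add: Cpath_def)

lemma Cpath_pair [simp]: "Cpath F G [x, y] = G x y"
  by (simp add: Cpath_def)

lemma Cpath_eq_prod:
  "2 \<le> length \<gamma> \<Longrightarrow>
   Cpath F G \<gamma> = (\<Prod>i<length \<gamma> - 1. G (\<gamma> ! i) (\<gamma> ! Suc i)) / (\<Prod>j\<in>{1..<length \<gamma> - 1}. F (\<gamma> ! j))"
  by (auto simp: Cpath_def numeral_2_eq_2 length_Suc_conv)

lemma Cpath_Cons:
  assumes "2 \<le> length \<gamma>"
  shows "Cpath F G (x # \<gamma>) = G x (hd \<gamma>) / F (hd \<gamma>) * Cpath F G \<gamma>"
proof -
  obtain y r where \<gamma>: "\<gamma> = y # r" using assms by (cases \<gamma>) auto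
  with assms have r: "r \<noteq> []" by auto
  have num: "(\<Prod>i<length \<gamma>. G ((x # \<gamma>) ! i) ((x # \<gamma>) ! Suc i))
      = G x y * (\<Prod>i<length \<gamma> - 1. G (\<gamma> ! i) (\<gamma> ! Suc i))"
    unfolding \<gamma> length_Cons prod.lessThan_Suc_shift by simp
  have "(\<Prod>j\<in>{1..<length \<gamma>}. F ((x # \<gamma>) ! j)) = F y * (\<Prod>j\<in>{Suc 1..<Suc (length \<gamma> - 1)}. F ((x # \<gamma>) ! j))"
    using \<gamma> r by (simp add: prod.atLeast_Suc_lessThan)
  also have "\<dots> = F y * (\<Prod>j\<in>{1..<length \<gamma> - 1}. F (\<gamma> ! j))"
    by (simp only: prod.shift_bounds_Suc_ivl nth_Cons_Suc)
  finally have den: "(\<Prod>j\<in>{1..<length \<gamma>}. F ((x # \<gamma>) ! j)) = F y * (\<Prod>j\<in>{1..<length \<gamma> - 1}. F (\<gamma> ! j))" .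
  have "Cpath F G (x # \<gamma>) = (\<Prod>i<length \<gamma>. G ((x # \<gamma>) ! i) ((x # \<gamma>) ! Suc i))
      / (\<Prod>j\<in>{1..<length \<gamma>}. F ((x # \<gamma>) ! j))"
    by (subst Cpath_eq_prod) (use assms in auto)
  moreover have "hd \<gamma> = y" using \<gamma> by simp
  ultimately show ?thesis
    unfolding num den Cpath_eq_prod[OF assms] by simp
qed

lemma Cpath_append:
  assumes "2 \<le> length p" "2 \<le> length q" "last p = hd q"
  shows "Cpath F G (p @ tl q) = Cpath F G p * Cpath F G q / F (hd q)"
  using assms
proof (induction p rule: induct_list012)
  case (3 x y zs)
  have q: "q = hd q # tl q" using "3.prems"(2) by (cases q) auto
  show ?case
  proof (cases zs)
    case Nil
    with "3.prems" have "[x, y] @ tl q = x # q" by (subst q) simp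
    with Nil "3.prems" show ?thesis by (simp add: Cpath_Cons)
  next
    case (Cons z zs')
    have "(x # y # zs) @ tl q = x # ((y # zs) @ tl q)" by simp
    moreover have "Cpath F G ((y # zs) @ tl q) = Cpath F G (y # zs) * Cpath F G q / F (hd q)"
      using Cons "3.prems" by (intro "3.IH"(2)) auto
    ultimately show ?thesis
      using Cons "3.prems"(2) by (simp add: Cpath_Cons)
  qed
qed auto

lemma Cpath_pos:
  assumes "opath ar \<gamma>" "2 \<le> length \<gamma>"
    and "\<And>x y. ar x y \<Longrightarrow> 0 < G x y" and "\<And>x y z. ar x y \<Longrightarrow> ar y z \<Longrightarrow> 0 < F y"
  shows "0 < Cpath F G \<gamma>"
  using assms(1,2)
proof (induction \<gamma> rule: induct_list012)
  case (3 x y zs)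
  show ?case
  proof (cases zs)
    case (Cons z zs')
    with "3.prems" have "0 < G x y" "0 < F y" "0 < Cpath F G (y # zs)"
      using assms(3,4) "3.IH"(2) by auto
    with Cons show ?thesis by (simp add: Cpath_Cons)
  qed (use "3.prems" assms(3) in simp)
qed auto

locale continuity_flow =
  fixes ar :: "'v \<Rightarrow> 'v \<Rightarrow> bool" and f :: "real \<Rightarrow> 'v \<Rightarrow> real"
    and g :: "real \<Rightarrow> 'v \<Rightarrow> 'v \<Rightarrow> real" and h :: "real \<Rightarrow> 'v \<Rightarrow> 'v \<Rightarrow> 'v \<Rightarrow> real"
  assumes mass_nonneg: "t \<in> {0..1} \<Longrightarrow> 0 \<le> f t x"
    and mass_deriv: "t \<in> {0..1} \<Longrightarrow>
      ((\<lambda>\<tau>. f \<tau> x) has_real_derivative - div_v ar (g t) x) (at t within {0..1})"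
    and flux_deriv: "t \<in> {0..1} \<Longrightarrow> ar x y \<Longrightarrow>
      ((\<lambda>\<tau>. g \<tau> x y) has_real_derivative - div_e ar (h t) x y) (at t within {0..1})"
    and flux_pos: "t \<in> {0..1} \<Longrightarrow> ar x y \<Longrightarrow> 0 < g t x y"
    and mass_flux_triple: "t \<in> {0..1} \<Longrightarrow> ar x0 x1 \<Longrightarrow> ar x1 x2 \<Longrightarrow>
      f t x1 * h t x0 x1 x2 = g t x0 x1 * g t x1 x2"
begin

lemma mass_pos:
  assumes "t \<in> {0..1}" "ar x y" "ar y z"
  shows "0 < f t y"
proof -
  have "0 < f t y * h t x y z"
    using mass_flux_triple[OF assms] flux_pos[OF assms(1,2)] flux_pos[OF assms(1,3)] by simp
  then show ?thesis using mass_nonneg[OF assms(1), of y] by (cases "f t y = 0") auto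
qed

lemma triple_flux_eq:
  assumes "t \<in> {0..1}" "ar x0 x1" "ar x1 x2"
  shows "h t x0 x1 x2 = g t x0 x1 * g t x1 x2 / f t x1"
  using mass_flux_triple[OF assms] mass_pos[OF assms] by (simp add: field_simps)

definition influx :: "real \<Rightarrow> 'v \<Rightarrow> real" where
  "influx t x = (\<Sum>x0\<in>Eset ar x. g t x0 x) / f t x"

definition efflux :: "real \<Rightarrow> 'v \<Rightarrow> real" where
  "efflux t x = (\<Sum>x2\<in>Fset ar x. g t x x2) / f t x"

lemma flux_has_derivative:
  assumes t: "t \<in> {0..1}" and xy: "ar x y"
  shows "((\<lambda>\<tau>. g \<tau> x y) has_real_derivative g t x y * (influx t x - efflux t y)) (at t within {0..1})"
proof -
  have "(\<Sum>x0\<in>Eset ar x. h t x0 x y) = (\<Sum>x0\<in>Eset ar x. g t x0 x * g t x y / f t x)"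
    using triple_flux_eq[OF t _ xy] by (intro sum.cong) (auto simp: Eset_def)
  also have "\<dots> = g t x y * influx t x"
    unfolding influx_def sum_divide_distrib sum_distrib_left by (simp add: mult.commute)
  finally have "(\<Sum>x0\<in>Eset ar x. h t x0 x y) = g t x y * influx t x" .
  moreover have "(\<Sum>x2\<in>Fset ar y. h t x y x2) = (\<Sum>x2\<in>Fset ar y. g t x y * g t y x2 / f t y)"
    using triple_flux_eq[OF t xy] by (intro sum.cong) (auto simp: Fset_def)
  then have "(\<Sum>x2\<in>Fset ar y. h t x y x2) = g t x y * efflux t y"
    by (simp add: efflux_def sum_divide_distrib sum_distrib_left)
  ultimately have "- div_e ar (h t) x y = g t x y * (influx t x - efflux t y)"
    by (simp add: div_e_def algebra_simps)
  with flux_deriv[OF t xy] show ?thesis by simp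
qed

lemma mass_has_derivative:
  assumes t: "t \<in> {0..1}" and "ar x y" "ar y z"
  shows "((\<lambda>\<tau>. f \<tau> y) has_real_derivative f t y * (influx t y - efflux t y)) (at t within {0..1})"
proof -
  have "- div_v ar (g t) y = f t y * (influx t y - efflux t y)"
    using mass_pos[OF assms] by (simp add: div_v_def influx_def efflux_def algebra_simps)
  with mass_deriv[OF t, of y] show ?thesis by simp
qed

text \<open>The logarithmic derivative of the path weight telescopes along the path.\<close>

lemma Cpath_has_derivative:
  assumes "opath ar \<gamma>" "2 \<le> length \<gamma>" and t: "t \<in> {0..1}"
  shows "((\<lambda>\<tau>. Cpath (f \<tau>) (g \<tau>) \<gamma>) has_real_derivative
      Cpath (f t) (g t) \<gamma> * (influx t (hd \<gamma>) - efflux t (last \<gamma>))) (at t within {0..1})"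
  using assms(1,2)
proof (induction \<gamma> rule: induct_list012)
  case (3 x y zs)
  show ?case
  proof (cases zs)
    case Nil
    with "3.prems" flux_has_derivative[OF t] show ?thesis by simp
  next
    case (Cons z zs')
    let ?C = "\<lambda>\<tau>. Cpath (f \<tau>) (g \<tau>) (y # zs)" and ?l = "last (y # zs)"
    from "3.prems" Cons have xy: "ar x y" and yz: "ar y z" and op: "opath ar (y # zs)" by auto
    have fy: "0 < f t y" by (rule mass_pos[OF t xy yz])
    have IH: "(?C has_real_derivative ?C t * (influx t y - efflux t ?l)) (at t within {0..1})"
      using "3.IH"(2) op Cons by simp
    have "((\<lambda>\<tau>. g \<tau> x y / f \<tau> y * ?C \<tau>) has_real_derivative
        (g t x y * (influx t x - efflux t y) * f t y - g t x y * (f t y * (influx t y - efflux t y)))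
          / (f t y * f t y) * ?C t + ?C t * (influx t y - efflux t ?l) * (g t x y / f t y))
        (at t within {0..1})"
      by (intro DERIV_mult DERIV_divide flux_has_derivative[OF t xy] mass_has_derivative[OF t xy yz] IH)
        (use fy in simp)
    moreover have "(g t x y * (influx t x - efflux t y) * f t y - g t x y * (f t y * (influx t y - efflux t y)))
          / (f t y * f t y) * ?C t + ?C t * (influx t y - efflux t ?l) * (g t x y / f t y)
        = g t x y / f t y * ?C t * (influx t x - efflux t ?l)"
      using fy by (simp add: field_simps)
    ultimately show ?thesis using Cons by (simp add: Cpath_Cons)
  qed
qed auto

lemma extremal_Cpath_const:
  assumes ex: "extremal ar \<gamma>" and t: "t \<in> {0..1}"
  shows "Cpath (f t) (g t) \<gamma> = Cpath (f 0) (g 0) \<gamma>"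
proof -
  have op: "opath ar \<gamma>" and src: "Eset ar (hd \<gamma>) = {}" and snk: "Fset ar (last \<gamma>) = {}"
    using ex by (auto simp: extremal_def Aset_def Bset_def)
  have "\<forall>s\<in>{0..1}. ((\<lambda>\<tau>. Cpath (f \<tau>) (g \<tau>) \<gamma>) has_real_derivative 0) (at s within {0..1})"
  proof
    fix s :: real assume s: "s \<in> {0..1}"
    show "((\<lambda>\<tau>. Cpath (f \<tau>) (g \<tau>) \<gamma>) has_real_derivative 0) (at s within {0..1})"
    proof (cases "2 \<le> length \<gamma>")
      case True
      then show ?thesis
        using Cpath_has_derivative[OF op True s] src snk by (simp add: influx_def efflux_def)
    next
      case False
      with op have "length \<gamma> = 1" by (cases \<gamma>) (auto simp: Suc_le_eq)
      then obtain x where "\<gamma> = [x]" by (auto simp: length_Suc_conv)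
      with mass_deriv[OF s, of x] src snk show ?thesis by (simp add: div_v_def)
    qed
  qed
  then obtain c where "\<forall>s\<in>{0..1::real}. Cpath (f s) (g s) \<gamma> = c"
    using has_field_derivative_zero_constant[of "{0..1::real}"] by blast
  with t show ?thesis by simp
qed

lemma mfun_time_invariant:
  assumes "t \<in> {0..1}"
  shows "mfun ar (f t) (g t) zs = mfun ar (f 0) (g 0) zs"
  unfolding mfun_def using extremal_Cpath_const[OF _ assms] by (intro sum.cong) auto

end

section \<open>Extremal paths through a segment\<close>

locale straight_orientation =
  fixes ar :: "'v \<Rightarrow> 'v \<Rightarrow> bool"
  assumes finite_arrow_vertices: "finite {x. \<exists>y. ar x y \<or> ar y x}"
    and opath_distinct: "opath ar \<gamma> \<Longrightarrow> distinct \<gamma>"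
    and opath_chordless: "opath ar \<gamma> \<Longrightarrow> i \<le> j \<Longrightarrow> j < length \<gamma> \<Longrightarrow> ar (\<gamma> ! i) (\<gamma> ! j) \<Longrightarrow> j = Suc i"
begin

lemma long_opath_set_subset:
  assumes "opath ar \<gamma>" "2 \<le> length \<gamma>"
  shows "set \<gamma> \<subseteq> {x. \<exists>y. ar x y \<or> ar y x}"
proof
  fix v assume "v \<in> set \<gamma>"
  then obtain i where i: "i < length \<gamma>" "\<gamma> ! i = v" by (auto simp: in_set_conv_nth)
  show "v \<in> {x. \<exists>y. ar x y \<or> ar y x}"
  proof (cases "Suc i < length \<gamma>")
    case True
    then show ?thesis using opath_nth[OF assms(1) True] i by auto
  next
    case False
    with assms(2) i have "Suc (i - 1) < length \<gamma>" "Suc (i - 1) = i" by auto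
    then show ?thesis using opath_nth[OF assms(1), of "i - 1"] i by auto
  qed
qed

lemma finite_opaths_through: "finite {\<gamma>. opath ar \<gamma> \<and> x \<in> set \<gamma>}"
proof -
  let ?V = "{x. \<exists>y. ar x y \<or> ar y x}"
  have "{\<gamma>. opath ar \<gamma> \<and> x \<in> set \<gamma>} \<subseteq> {[x]} \<union> {\<gamma>. set \<gamma> \<subseteq> ?V \<and> length \<gamma> \<le> card ?V}"
  proof
    fix \<gamma> assume \<gamma>: "\<gamma> \<in> {\<gamma>. opath ar \<gamma> \<and> x \<in> set \<gamma>}"
    show "\<gamma> \<in> {[x]} \<union> {\<gamma>. set \<gamma> \<subseteq> ?V \<and> length \<gamma> \<le> card ?V}"
    proof (cases "2 \<le> length \<gamma>")
      case True
      with \<gamma> have "set \<gamma> \<subseteq> ?V" by (simp add: long_opath_set_subset)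
      moreover have "length \<gamma> = card (set \<gamma>)"
        using \<gamma> opath_distinct by (simp add: distinct_card)
      ultimately show ?thesis using card_mono[OF finite_arrow_vertices] by auto
    next
      case False
      with \<gamma> show ?thesis by (cases \<gamma>) (auto simp: Suc_le_eq)
    qed
  qed
  moreover have "finite {\<gamma>. set \<gamma> \<subseteq> ?V \<and> length \<gamma> \<le> card ?V}"
    using finite_lists_length_le[OF finite_arrow_vertices] .
  ultimately show ?thesis by (meson finite.emptyI finite_UnI finite_insert finite_subset)
qed

lemma finite_SE1: "finite (SE1 ar x)"
  by (rule finite_subset[OF _ finite_opaths_through[of x]]) (auto simp: SE1_def intro!: last_in_set)

lemma finite_SE2: "finite (SE2 ar x)"
  by (rule finite_subset[OF _ finite_opaths_through[of x]]) (auto simp: SE2_def intro!: hd_in_set)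

lemma SE2_nonempty: "SE2 ar x \<noteq> {}"
proof -
  let ?P = "{\<gamma>. opath ar \<gamma> \<and> hd \<gamma> = x}"
  have fin: "finite (length ` ?P)"
    by (rule finite_imageI, rule finite_subset[OF _ finite_opaths_through[of x]]) (auto intro!: hd_in_set)
  have "[x] \<in> ?P" by simp
  then obtain \<gamma> where \<gamma>: "\<gamma> \<in> ?P" "length \<gamma> = Max (length ` ?P)"
    using Max_in[OF fin] by fastforce
  have "last \<gamma> \<in> Bset ar"
  proof (rule ccontr)
    assume "last \<gamma> \<notin> Bset ar"
    then obtain y where "ar (last \<gamma>) y" by (auto simp: Bset_def Fset_def)
    moreover have "\<gamma> \<noteq> []" using \<gamma>(1) by auto
    ultimately have "\<gamma> @ [y] \<in> ?P" using \<gamma>(1) by (simp add: opath_append)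
    then have "length (\<gamma> @ [y]) \<le> Max (length ` ?P)" by (intro Max_ge[OF fin] imageI)
    then show False using \<gamma>(2) by simp
  qed
  with \<gamma>(1) show ?thesis by (auto simp: SE2_def)
qed

lemma SE1_nonempty: "SE1 ar x \<noteq> {}"
proof -
  let ?P = "{\<gamma>. opath ar \<gamma> \<and> last \<gamma> = x}"
  have fin: "finite (length ` ?P)"
    by (rule finite_imageI, rule finite_subset[OF _ finite_opaths_through[of x]]) (auto intro!: last_in_set)
  have "[x] \<in> ?P" by simp
  then obtain \<gamma> where \<gamma>: "\<gamma> \<in> ?P" "length \<gamma> = Max (length ` ?P)"
    using Max_in[OF fin] by fastforce
  have "hd \<gamma> \<in> Aset ar"
  proof (rule ccontr)
    assume "hd \<gamma> \<notin> Aset ar"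
    then obtain y where "ar y (hd \<gamma>)" by (auto simp: Aset_def Eset_def)
    moreover have "\<gamma> \<noteq> []" using \<gamma>(1) by auto
    ultimately have "[y] @ \<gamma> \<in> ?P" using \<gamma>(1) opath_append[of "[y]" \<gamma> ar] by simp
    then have "length ([y] @ \<gamma>) \<le> Max (length ` ?P)" by (intro Max_ge[OF fin] imageI)
    then show False using \<gamma>(2) by simp
  qed
  with \<gamma>(1) show ?thesis by (auto simp: SE1_def)
qed

end

sublocale W1_transport \<subseteq> straight_orientation "W1_arrow adj f0 f1"
  using finite_W1_arrow_vertices opath_distinct opath_chordless by unfold_locales

definition path_splice :: "'a list \<Rightarrow> 'a list \<times> 'a list \<Rightarrow> 'a list" where
  "path_splice \<sigma> p = butlast (fst p) @ \<sigma> @ tl (snd p)"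

definition extremal_through :: "('v \<Rightarrow> 'v \<Rightarrow> bool) \<Rightarrow> 'v list \<Rightarrow> 'v list set" where
  "extremal_through ar \<sigma> =
     {\<gamma>. extremal ar \<gamma> \<and> (\<exists>k. k + length \<sigma> \<le> length \<gamma> \<and> take (length \<sigma>) (drop k \<gamma>) = \<sigma>)}"

definition extremal_visiting :: "('v \<Rightarrow> 'v \<Rightarrow> bool) \<Rightarrow> 'v list \<Rightarrow> 'v list set" where
  "extremal_visiting ar zs =
     {\<gamma>. extremal ar \<gamma> \<and>
        (\<exists>ks. length ks = length zs \<and> sorted ks \<and>
              (\<forall>i<length zs. ks ! i < length \<gamma> \<and> \<gamma> ! (ks ! i) = zs ! i))}"

lemma mfun_eq_sum_visiting: "mfun ar F G zs = (\<Sum>\<gamma>\<in>extremal_visiting ar zs. Cpath F G \<gamma>)"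
  unfolding mfun_def extremal_visiting_def ..

lemma path_splice_eq_append:
  "\<sigma> \<noteq> [] \<Longrightarrow> \<gamma>1 \<noteq> [] \<Longrightarrow> last \<gamma>1 = hd \<sigma> \<Longrightarrow> path_splice \<sigma> (\<gamma>1, \<gamma>2) = (\<gamma>1 @ tl \<sigma>) @ tl \<gamma>2"
  unfolding path_splice_def by (cases \<sigma>) (simp_all, metis append_butlast_last_id append_Cons append_assoc)

lemma path_splice_in_extremal_through:
  assumes \<sigma>: "opath ar \<sigma>" and \<gamma>1: "\<gamma>1 \<in> SE1 ar (hd \<sigma>)" and \<gamma>2: "\<gamma>2 \<in> SE2 ar (last \<sigma>)"
  shows "path_splice \<sigma> (\<gamma>1, \<gamma>2) \<in> extremal_through ar \<sigma>"
proof -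
  have h1: "opath ar \<gamma>1" "hd \<gamma>1 \<in> Aset ar" "last \<gamma>1 = hd \<sigma>" "\<gamma>1 \<noteq> []"
    using \<gamma>1 by (auto simp: SE1_def)
  have h2: "opath ar \<gamma>2" "last \<gamma>2 \<in> Bset ar" "hd \<gamma>2 = last \<sigma>" "\<gamma>2 \<noteq> []"
    using \<gamma>2 by (auto simp: SE2_def)
  have "\<sigma> \<noteq> []" using \<sigma> by auto
  then have op1: "opath ar (\<gamma>1 @ tl \<sigma>)" and last1: "last (\<gamma>1 @ tl \<sigma>) = last \<sigma>"
    using opath_join[OF h1(1) \<sigma> h1(3)] last_append_tl[OF h1(3,4)] by auto
  have "opath ar ((\<gamma>1 @ tl \<sigma>) @ tl \<gamma>2)"
    by (rule opath_join[OF op1 h2(1)]) (simp add: last1 h2(3))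
  moreover have "last ((\<gamma>1 @ tl \<sigma>) @ tl \<gamma>2) = last \<gamma>2"
    by (rule last_append_tl) (use last1 h1(4) h2 in auto)
  moreover have "hd ((\<gamma>1 @ tl \<sigma>) @ tl \<gamma>2) = hd \<gamma>1" using h1(4) by simp
  ultimately have "extremal ar (path_splice \<sigma> (\<gamma>1, \<gamma>2))"
    using path_splice_eq_append[OF \<open>\<sigma> \<noteq> []\<close> h1(4,3)] h1(2) h2(2) by (simp add: extremal_def)
  moreover have "take (length \<sigma>) (drop (length (butlast \<gamma>1)) (path_splice \<sigma> (\<gamma>1, \<gamma>2))) = \<sigma>"
    "length (butlast \<gamma>1) + length \<sigma> \<le> length (path_splice \<sigma> (\<gamma>1, \<gamma>2))"
    by (simp_all add: path_splice_def)
  ultimately show ?thesis unfolding extremal_through_def by blast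
qed

lemma extremal_through_subset_path_splice:
  assumes \<sigma>: "opath ar \<sigma>" and \<gamma>: "\<gamma> \<in> extremal_through ar \<sigma>"
  shows "\<gamma> \<in> path_splice \<sigma> ` (SE1 ar (hd \<sigma>) \<times> SE2 ar (last \<sigma>))"
proof -
  obtain k where k: "k + length \<sigma> \<le> length \<gamma>" "take (length \<sigma>) (drop k \<gamma>) = \<sigma>" and ex: "extremal ar \<gamma>"
    using \<gamma> unfolding extremal_through_def by blast
  define l where "l = length \<sigma>"
  have l: "1 \<le> l" using \<sigma> unfolding l_def by (cases \<sigma>) auto
  have op: "opath ar \<gamma>" "hd \<gamma> \<in> Aset ar" "last \<gamma> \<in> Bset ar" using ex by (auto simp: extremal_def)
  have nth: "\<gamma> ! (k + i) = \<sigma> ! i" if "i < l" for i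
  proof -
    have "\<sigma> ! i = take l (drop k \<gamma>) ! i" using k(2) by (simp add: l_def)
    also have "\<dots> = \<gamma> ! (k + i)" using that k(1) by (simp add: l_def)
    finally show ?thesis by simp
  qed
  have kl: "k < length \<gamma>" "k + l - 1 < length \<gamma>" using k l l_def by auto
  have hd\<sigma>: "\<gamma> ! k = hd \<sigma>" using nth[of 0] l \<sigma> by (cases \<sigma>) auto
  have "\<sigma> \<noteq> []" using \<sigma> by auto
  then have last\<sigma>: "\<gamma> ! (k + l - 1) = last \<sigma>" using nth[of "l - 1"] l by (simp add: l_def last_conv_nth)
  define \<gamma>1 \<gamma>2 where "\<gamma>1 = take (Suc k) \<gamma>" and "\<gamma>2 = drop (k + l - 1) \<gamma>"
  have "\<gamma>1 \<in> SE1 ar (hd \<sigma>)"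
    unfolding SE1_def \<gamma>1_def using opath_slice[OF op(1), of 0 k] kl(1) op(2) hd\<sigma> by simp
  moreover have "\<gamma>2 \<in> SE2 ar (last \<sigma>)"
    unfolding SE2_def \<gamma>2_def using opath_drop[OF op(1) kl(2)] op(3) kl(2) last\<sigma> by (simp add: hd_drop_conv_nth)
  moreover have "path_splice \<sigma> (\<gamma>1, \<gamma>2) = \<gamma>"
  proof -
    have "butlast \<gamma>1 = take k \<gamma>" unfolding \<gamma>1_def using kl(1) by (simp add: butlast_take)
    moreover have "tl \<gamma>2 = drop (k + l) \<gamma>" unfolding \<gamma>2_def using l by (simp add: drop_Suc[symmetric] tl_drop drop_Suc)
    ultimately have "path_splice \<sigma> (\<gamma>1, \<gamma>2) = take k \<gamma> @ take l (drop k \<gamma>) @ drop l (drop k \<gamma>)"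
      using k(2) by (simp add: path_splice_def l_def add.commute)
    then show ?thesis
      using append_take_drop_id[of l "drop k \<gamma>"] append_take_drop_id[of k \<gamma>] by (simp add: drop_drop)
  qed
  ultimately show ?thesis by force
qed

context straight_orientation
begin

lemma inj_on_path_splice:
  assumes \<sigma>: "opath ar \<sigma>"
  shows "inj_on (path_splice \<sigma>) (SE1 ar (hd \<sigma>) \<times> SE2 ar (last \<sigma>))"
proof (rule inj_onI, clarify)
  fix \<gamma>1 \<gamma>2 \<gamma>1' \<gamma>2'
  assume in1: "\<gamma>1 \<in> SE1 ar (hd \<sigma>)" "\<gamma>2 \<in> SE2 ar (last \<sigma>)"
    and in2: "\<gamma>1' \<in> SE1 ar (hd \<sigma>)" "\<gamma>2' \<in> SE2 ar (last \<sigma>)"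
    and eq: "path_splice \<sigma> (\<gamma>1, \<gamma>2) = path_splice \<sigma> (\<gamma>1', \<gamma>2')"
  let ?L = "path_splice \<sigma> (\<gamma>1, \<gamma>2)"
  have "distinct ?L"
    using path_splice_in_extremal_through[OF \<sigma> in1] opath_distinct
    by (simp add: extremal_through_def extremal_def)
  have "\<sigma> \<noteq> []" using \<sigma> by auto
  then have L: "?L = butlast \<gamma>1 @ hd \<sigma> # tl \<sigma> @ tl \<gamma>2"
    by (simp add: path_splice_def)
  from \<open>\<sigma> \<noteq> []\<close> have L': "?L = butlast \<gamma>1' @ hd \<sigma> # tl \<sigma> @ tl \<gamma>2'"
    unfolding eq by (simp add: path_splice_def)
  have pos1: "?L ! length (butlast \<gamma>1) = hd \<sigma>" by (subst L) (rule nth_append_length)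
  have pos2: "?L ! length (butlast \<gamma>1') = hd \<sigma>" by (subst L') (rule nth_append_length)
  have len1: "length (butlast \<gamma>1) < length ?L" by (subst L) simp
  have len2: "length (butlast \<gamma>1') < length ?L" by (subst L') simp
  have "length (butlast \<gamma>1) = length (butlast \<gamma>1')"
    using nth_eq_iff_index_eq[OF \<open>distinct ?L\<close> len1 len2] pos1 pos2 by simp
  with L L' have "butlast \<gamma>1 = butlast \<gamma>1'" and tl2: "tl \<gamma>2 = tl \<gamma>2'"
    by auto
  moreover have "\<gamma>1 \<noteq> []" "\<gamma>1' \<noteq> []" "last \<gamma>1 = last \<gamma>1'"
    using in1 in2 by (auto simp: SE1_def)
  ultimately have "\<gamma>1 = \<gamma>1'" by (metis append_butlast_last_id)
  moreover have "\<gamma>2 \<noteq> []" "\<gamma>2' \<noteq> []" "hd \<gamma>2 = hd \<gamma>2'"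
    using in1 in2 by (auto simp: SE2_def)
  then have "\<gamma>2 = \<gamma>2'" using tl2 by (metis list.collapse)
  ultimately show "\<gamma>1 = \<gamma>1' \<and> \<gamma>2 = \<gamma>2'" by simp
qed

lemma sum_extremal_through:
  assumes "opath ar \<sigma>"
  shows "(\<Sum>\<gamma>\<in>extremal_through ar \<sigma>. w \<gamma>)
    = (\<Sum>\<gamma>1\<in>SE1 ar (hd \<sigma>). \<Sum>\<gamma>2\<in>SE2 ar (last \<sigma>). w (path_splice \<sigma> (\<gamma>1, \<gamma>2)))"
proof -
  have "extremal_through ar \<sigma> = path_splice \<sigma> ` (SE1 ar (hd \<sigma>) \<times> SE2 ar (last \<sigma>))"
    using extremal_through_subset_path_splice[OF assms] path_splice_in_extremal_through[OF assms] by blast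
  then show ?thesis
    by (simp add: sum.reindex[OF inj_on_path_splice[OF assms]] sum.cartesian_product)
qed

lemma extremal_visiting_eq_through:
  assumes \<sigma>: "opath ar \<sigma>"
  shows "extremal_visiting ar \<sigma> = extremal_through ar \<sigma>"
proof (intro set_eqI iffI)
  fix \<gamma> assume "\<gamma> \<in> extremal_visiting ar \<sigma>"
  then obtain ks where ex: "extremal ar \<gamma>" and ks: "length ks = length \<sigma>" "sorted ks"
    and at: "\<And>i. i < length \<sigma> \<Longrightarrow> ks ! i < length \<gamma> \<and> \<gamma> ! (ks ! i) = \<sigma> ! i"
    unfolding extremal_visiting_def by blast
  have op: "opath ar \<gamma>" using ex by (simp add: extremal_def)
  have consec: "ks ! i = ks ! 0 + i" if "i < length \<sigma>" for i
    using that
  proof (induction i)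
    case (Suc i)
    have "ks ! i \<le> ks ! Suc i" using ks Suc.prems by (simp add: sorted_iff_nth_mono)
    moreover have "ar (\<gamma> ! (ks ! i)) (\<gamma> ! (ks ! Suc i))"
      using opath_nth[OF \<sigma> Suc.prems] at[of i] at[OF Suc.prems] Suc.prems by simp
    ultimately have "ks ! Suc i = Suc (ks ! i)"
      using opath_chordless[OF op] at[OF Suc.prems] by blast
    with Suc show ?case by simp
  qed simp
  have "0 < length \<sigma>" using \<sigma> by (cases \<sigma>) auto
  then have "ks ! 0 + (length \<sigma> - 1) < length \<gamma>"
    using at[of "length \<sigma> - 1"] consec[of "length \<sigma> - 1"] by simp
  with \<open>0 < length \<sigma>\<close> have "ks ! 0 + length \<sigma> \<le> length \<gamma>" by linarith
  moreover have "take (length \<sigma>) (drop (ks ! 0) \<gamma>) = \<sigma>"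
    using calculation at consec by (intro nth_equalityI) auto
  ultimately show "\<gamma> \<in> extremal_through ar \<sigma>"
    using ex unfolding extremal_through_def by blast
next
  fix \<gamma> assume "\<gamma> \<in> extremal_through ar \<sigma>"
  then obtain k where ex: "extremal ar \<gamma>" and k: "k + length \<sigma> \<le> length \<gamma>" "take (length \<sigma>) (drop k \<gamma>) = \<sigma>"
    unfolding extremal_through_def by blast
  have "\<gamma> ! (k + i) = \<sigma> ! i" if "i < length \<sigma>" for i
    using that k by (metis add_leD1 nth_drop nth_take)
  then have "\<forall>i<length \<sigma>. [k..<k + length \<sigma>] ! i < length \<gamma> \<and> \<gamma> ! ([k..<k + length \<sigma>] ! i) = \<sigma> ! i"
    using k(1) by simp
  then show "\<gamma> \<in> extremal_visiting ar \<sigma>"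
    using ex unfolding extremal_visiting_def by (intro CollectI conjI exI[of _ "[k..<k + length \<sigma>]"]) auto
qed

end

section \<open>Factorization through sources and sinks\<close>

lemma SE1_source: "x \<in> Aset ar \<Longrightarrow> SE1 ar x = {[x]}"
proof (intro equalityI subsetI)
  fix \<gamma> assume x: "x \<in> Aset ar" and "\<gamma> \<in> SE1 ar x"
  then have \<gamma>: "opath ar \<gamma>" "last \<gamma> = x" by (auto simp: SE1_def)
  show "\<gamma> \<in> {[x]}"
  proof (cases "2 \<le> length \<gamma>")
    case True
    then have "ar (\<gamma> ! (length \<gamma> - 2)) (\<gamma> ! Suc (length \<gamma> - 2))" by (intro opath_nth[OF \<gamma>(1)]) auto
    moreover have "Suc (length \<gamma> - 2) = length \<gamma> - 1" "\<gamma> \<noteq> []" using True by auto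
    then have "\<gamma> ! Suc (length \<gamma> - 2) = x" using \<gamma>(2) by (simp add: last_conv_nth)
    ultimately show ?thesis using x by (auto simp: Aset_def Eset_def)
  next
    case False
    with \<gamma> show ?thesis by (cases \<gamma>) (auto simp: Suc_le_eq)
  qed
qed (auto simp: SE1_def)

lemma SE2_sink: "x \<in> Bset ar \<Longrightarrow> SE2 ar x = {[x]}"
proof (intro equalityI subsetI)
  fix \<gamma> assume x: "x \<in> Bset ar" and "\<gamma> \<in> SE2 ar x"
  then have \<gamma>: "opath ar \<gamma>" "hd \<gamma> = x" by (auto simp: SE2_def)
  show "\<gamma> \<in> {[x]}"
  proof (cases "2 \<le> length \<gamma>")
    case True
    then have "ar (\<gamma> ! 0) (\<gamma> ! 1)" using opath_nth[OF \<gamma>(1), of 0] by simp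
    moreover have "\<gamma> ! 0 = x" using \<gamma> True by (cases \<gamma>) auto
    ultimately show ?thesis using x by (auto simp: Bset_def Fset_def)
  next
    case False
    with \<gamma> show ?thesis by (cases \<gamma>) (auto simp: Suc_le_eq)
  qed
qed (auto simp: SE2_def)

lemma SE1_not_source_length: "x \<notin> Aset ar \<Longrightarrow> \<gamma> \<in> SE1 ar x \<Longrightarrow> 2 \<le> length \<gamma>"
  by (cases \<gamma>; cases "tl \<gamma>") (auto simp: SE1_def)

lemma SE2_not_sink_length: "x \<notin> Bset ar \<Longrightarrow> \<gamma> \<in> SE2 ar x \<Longrightarrow> 2 \<le> length \<gamma>"
  by (cases \<gamma>; cases "tl \<gamma>") (auto simp: SE2_def)

definition Cpath_open_end :: "('v \<Rightarrow> real) \<Rightarrow> ('v \<Rightarrow> 'v \<Rightarrow> real) \<Rightarrow> 'v list \<Rightarrow> real" where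
  "Cpath_open_end F G \<gamma> = (if 2 \<le> length \<gamma> then Cpath F G \<gamma> / F (last \<gamma>) else 1)"

definition Cpath_open_start :: "('v \<Rightarrow> real) \<Rightarrow> ('v \<Rightarrow> 'v \<Rightarrow> real) \<Rightarrow> 'v list \<Rightarrow> real" where
  "Cpath_open_start F G \<gamma> = (if 2 \<le> length \<gamma> then Cpath F G \<gamma> / F (hd \<gamma>) else 1)"

lemma Cpath_append_open_end:
  assumes "p \<noteq> []" "last p = hd q" "2 \<le> length q"
  shows "Cpath F G (p @ tl q) = Cpath_open_end F G p * Cpath F G q"
proof (cases "2 \<le> length p")
  case True
  then show ?thesis using Cpath_append[OF True assms(3,2)] assms(2) by (simp add: Cpath_open_end_def)
next
  case False
  with assms(1) obtain x where "p = [x]" by (cases p) (auto simp: Suc_le_eq)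
  with assms(2,3) show ?thesis by (cases q) (auto simp: Cpath_open_end_def)
qed

lemma Cpath_append_open_start:
  assumes "q \<noteq> []" "last p = hd q" "2 \<le> length p"
  shows "Cpath F G (p @ tl q) = Cpath F G p * Cpath_open_start F G q"
proof (cases "2 \<le> length q")
  case True
  then show ?thesis using Cpath_append[OF assms(3) True assms(2)] by (simp add: Cpath_open_start_def)
next
  case False
  with assms(1) obtain x where "q = [x]" by (cases q) (auto simp: Suc_le_eq)
  then show ?thesis by (simp add: Cpath_open_start_def)
qed

lemma Cpath_path_splice:
  assumes "2 \<le> length \<sigma>" "\<gamma>1 \<noteq> []" "last \<gamma>1 = hd \<sigma>" "\<gamma>2 \<noteq> []" "hd \<gamma>2 = last \<sigma>"
  shows "Cpath F G (path_splice \<sigma> (\<gamma>1, \<gamma>2)) = Cpath_open_end F G \<gamma>1 * Cpath F G \<sigma> * Cpath_open_start F G \<gamma>2"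
proof -
  have "\<sigma> \<noteq> []" using assms(1) by auto
  moreover have "2 \<le> length (\<gamma>1 @ tl \<sigma>)" using assms(1,2) by (cases \<gamma>1) auto
  moreover have "last (\<gamma>1 @ tl \<sigma>) = hd \<gamma>2"
    using last_append_tl[OF assms(3,2) \<open>\<sigma> \<noteq> []\<close>] assms(5) by simp
  ultimately have "Cpath F G ((\<gamma>1 @ tl \<sigma>) @ tl \<gamma>2) = Cpath F G (\<gamma>1 @ tl \<sigma>) * Cpath_open_start F G \<gamma>2"
    by (intro Cpath_append_open_start[OF assms(4)])
  also have "\<dots> = Cpath_open_end F G \<gamma>1 * Cpath F G \<sigma> * Cpath_open_start F G \<gamma>2"
    by (simp only: Cpath_append_open_end[OF assms(2,3,1)])
  finally show ?thesis
    by (simp only: path_splice_eq_append[OF \<open>\<sigma> \<noteq> []\<close> assms(2,3)])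
qed

lemma long_opath_ends:
  assumes "opath ar \<sigma>" "2 \<le> length \<sigma>"
  shows "hd \<sigma> \<notin> Bset ar" "last \<sigma> \<notin> Aset ar"
proof -
  have "\<sigma> \<noteq> []" using assms(2) by auto
  have "ar (\<sigma> ! 0) (\<sigma> ! 1)" using opath_nth[OF assms(1), of 0] assms(2) by simp
  then show "hd \<sigma> \<notin> Bset ar" using \<open>\<sigma> \<noteq> []\<close> by (auto simp: Bset_def Fset_def hd_conv_nth)
  have "ar (\<sigma> ! (length \<sigma> - 2)) (\<sigma> ! Suc (length \<sigma> - 2))"
    using opath_nth[OF assms(1), of "length \<sigma> - 2"] assms(2) by simp
  moreover have "Suc (length \<sigma> - 2) = length \<sigma> - 1" using assms(2) by simp
  ultimately show "last \<sigma> \<notin> Aset ar" using \<open>\<sigma> \<noteq> []\<close> by (auto simp: Aset_def Eset_def last_conv_nth)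
qed

locale path_weights = straight_orientation ar for ar :: "'v \<Rightarrow> 'v \<Rightarrow> bool" +
  fixes F :: "'v \<Rightarrow> real" and G :: "'v \<Rightarrow> 'v \<Rightarrow> real"
  assumes weight_pos: "ar x y \<Longrightarrow> 0 < G x y"
    and interior_mass_pos: "ar x y \<Longrightarrow> ar y z \<Longrightarrow> 0 < F y"
begin

definition sources_weight :: "'v \<Rightarrow> real" where
  "sources_weight x = (\<Sum>\<gamma>\<in>SE1 ar x. Cpath F G \<gamma>)"

definition sinks_weight :: "'v \<Rightarrow> real" where
  "sinks_weight x = (\<Sum>\<gamma>\<in>SE2 ar x. Cpath F G \<gamma>)"

definition sources_weight_open :: "'v \<Rightarrow> real" where
  "sources_weight_open x = (\<Sum>\<gamma>\<in>SE1 ar x. Cpath_open_end F G \<gamma>)"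

definition sinks_weight_open :: "'v \<Rightarrow> real" where
  "sinks_weight_open x = (\<Sum>\<gamma>\<in>SE2 ar x. Cpath_open_start F G \<gamma>)"

lemma interior_vertex_mass_pos: "x \<notin> Aset ar \<Longrightarrow> x \<notin> Bset ar \<Longrightarrow> 0 < F x"
  using interior_mass_pos by (auto simp: Aset_def Bset_def Eset_def Fset_def)

lemma Cpath_long_opath_pos: "opath ar \<gamma> \<Longrightarrow> 2 \<le> length \<gamma> \<Longrightarrow> 0 < Cpath F G \<gamma>"
  using Cpath_pos weight_pos interior_mass_pos by blast

lemma sources_weight_pos: "x \<notin> Aset ar \<Longrightarrow> 0 < sources_weight x"
  unfolding sources_weight_def
  by (intro sum_pos finite_SE1 SE1_nonempty Cpath_long_opath_pos SE1_not_source_length)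
    (auto simp: SE1_def)

lemma sinks_weight_pos: "x \<notin> Bset ar \<Longrightarrow> 0 < sinks_weight x"
  unfolding sinks_weight_def
  by (intro sum_pos finite_SE2 SE2_nonempty Cpath_long_opath_pos SE2_not_sink_length)
    (auto simp: SE2_def)

lemma sources_weight_source: "x \<in> Aset ar \<Longrightarrow> sources_weight x = F x"
  by (simp add: sources_weight_def SE1_source)

lemma sinks_weight_sink: "x \<in> Bset ar \<Longrightarrow> sinks_weight x = F x"
  by (simp add: sinks_weight_def SE2_sink)

lemma sources_weight_open_eq: "sources_weight_open x = (if x \<in> Aset ar then 1 else sources_weight x / F x)"
proof (cases "x \<in> Aset ar")
  case False
  have "sources_weight_open x = (\<Sum>\<gamma>\<in>SE1 ar x. Cpath F G \<gamma> / F x)"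
    unfolding sources_weight_open_def
    using SE1_not_source_length[OF False] by (intro sum.cong) (auto simp: Cpath_open_end_def SE1_def)
  with False show ?thesis by (simp add: sources_weight_def sum_divide_distrib)
qed (simp add: sources_weight_open_def SE1_source Cpath_open_end_def)

lemma sinks_weight_open_eq: "sinks_weight_open x = (if x \<in> Bset ar then 1 else sinks_weight x / F x)"
proof (cases "x \<in> Bset ar")
  case False
  have "sinks_weight_open x = (\<Sum>\<gamma>\<in>SE2 ar x. Cpath F G \<gamma> / F x)"
    unfolding sinks_weight_open_def
    using SE2_not_sink_length[OF False] by (intro sum.cong) (auto simp: Cpath_open_start_def SE2_def)
  with False show ?thesis by (simp add: sinks_weight_def sum_divide_distrib)
qed (simp add: sinks_weight_open_def SE2_sink Cpath_open_start_def)

lemma sources_weight_open_pos: "x \<notin> Bset ar \<Longrightarrow> 0 < sources_weight_open x"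
  using sources_weight_pos interior_vertex_mass_pos by (simp add: sources_weight_open_eq)

lemma sinks_weight_open_pos: "x \<notin> Aset ar \<Longrightarrow> 0 < sinks_weight_open x"
  using sinks_weight_pos interior_vertex_mass_pos by (simp add: sinks_weight_open_eq)

lemma mfun_opath:
  assumes "opath ar \<sigma>"
  shows "mfun ar F G \<sigma>
    = (\<Sum>\<gamma>1\<in>SE1 ar (hd \<sigma>). \<Sum>\<gamma>2\<in>SE2 ar (last \<sigma>). Cpath F G (path_splice \<sigma> (\<gamma>1, \<gamma>2)))"
  using assms by (simp add: mfun_eq_sum_visiting extremal_visiting_eq_through sum_extremal_through)

lemma mfun_vertex:
  "mfun ar F G [x] = (\<Sum>\<gamma>1\<in>SE1 ar x. \<Sum>\<gamma>2\<in>SE2 ar x. Cpath F G (\<gamma>1 @ tl \<gamma>2))"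
proof -
  have "path_splice [x] (\<gamma>1, \<gamma>2) = \<gamma>1 @ tl \<gamma>2" if "\<gamma>1 \<in> SE1 ar x" for \<gamma>1 \<gamma>2
    using that path_splice_eq_append[of "[x]" \<gamma>1 \<gamma>2] by (auto simp: SE1_def dest: opath_nonempty)
  then show ?thesis using mfun_opath[of "[x]"] by simp
qed

lemma mfun_vertex_not_sink:
  assumes "x \<notin> Bset ar"
  shows "mfun ar F G [x] = sources_weight_open x * sinks_weight x"
  unfolding mfun_vertex sources_weight_open_def sinks_weight_def sum_product
  using SE2_not_sink_length[OF assms]
  by (intro sum.cong refl Cpath_append_open_end) (auto simp: SE1_def SE2_def)

lemma mfun_vertex_not_source:
  assumes "x \<notin> Aset ar"
  shows "mfun ar F G [x] = sources_weight x * sinks_weight_open x"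
  unfolding mfun_vertex sources_weight_def sinks_weight_open_def sum_product
  using SE1_not_source_length[OF assms]
  by (intro sum.cong refl Cpath_append_open_start) (auto simp: SE1_def SE2_def)

lemma mfun_vertex_isolated:
  assumes "x \<in> Aset ar" "x \<in> Bset ar"
  shows "mfun ar F G [x] = F x"
  by (simp add: mfun_vertex SE1_source[OF assms(1)] SE2_sink[OF assms(2)])

lemma mfun_long_opath:
  assumes "opath ar \<sigma>" "2 \<le> length \<sigma>"
  shows "mfun ar F G \<sigma> = sources_weight_open (hd \<sigma>) * Cpath F G \<sigma> * sinks_weight_open (last \<sigma>)"
proof -
  have "mfun ar F G \<sigma> = (\<Sum>\<gamma>1\<in>SE1 ar (hd \<sigma>). \<Sum>\<gamma>2\<in>SE2 ar (last \<sigma>).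
      Cpath_open_end F G \<gamma>1 * Cpath F G \<sigma> * Cpath_open_start F G \<gamma>2)"
    unfolding mfun_opath[OF assms(1)] using assms(2)
    by (intro sum.cong refl Cpath_path_splice) (auto simp: SE1_def SE2_def dest: opath_nonempty)
  also have "\<dots> = (\<Sum>\<gamma>1\<in>SE1 ar (hd \<sigma>). Cpath_open_end F G \<gamma>1 * Cpath F G \<sigma>)
      * (\<Sum>\<gamma>2\<in>SE2 ar (last \<sigma>). Cpath_open_start F G \<gamma>2)"
    by (simp only: sum_product)
  finally show ?thesis
    by (simp add: sources_weight_open_def sinks_weight_open_def sum_distrib_right)
qed

lemma mass_factorization:
  "F x = mfun ar F G [x] * (1 / mfun ar F G [x] * sinks_weight x) * (1 / mfun ar F G [x] * sources_weight x)"
proof (cases "x \<in> Aset ar"; cases "x \<in> Bset ar")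
  assume "x \<in> Aset ar" "x \<in> Bset ar"
  then show ?thesis
    by (cases "F x = 0") (simp_all add: mfun_vertex_isolated sources_weight_source sinks_weight_sink)
next
  assume "x \<in> Aset ar" "x \<notin> Bset ar"
  then show ?thesis
    using sinks_weight_pos[of x]
    by (simp add: mfun_vertex_not_sink sources_weight_open_eq sources_weight_source)
next
  assume "x \<notin> Aset ar" "x \<in> Bset ar"
  then show ?thesis
    using sources_weight_pos[of x]
    by (simp add: mfun_vertex_not_source sinks_weight_open_eq sinks_weight_sink)
next
  assume "x \<notin> Aset ar" "x \<notin> Bset ar"
  then show ?thesis
    using sources_weight_pos[of x] sinks_weight_pos[of x] interior_vertex_mass_pos[of x]
    by (simp add: mfun_vertex_not_sink sources_weight_open_eq field_simps)
qed

lemma Cpath_factorization: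
  assumes "opath ar \<sigma>" "2 \<le> length \<sigma>"
  shows "Cpath F G \<sigma> = mfun ar F G \<sigma> * (1 / mfun ar F G [hd \<sigma>] * sinks_weight (hd \<sigma>))
    * (1 / mfun ar F G [last \<sigma>] * sources_weight (last \<sigma>))"
proof -
  note ends = long_opath_ends[OF assms]
  have "0 < sources_weight_open (hd \<sigma>)" "0 < sinks_weight (hd \<sigma>)"
    "0 < sources_weight (last \<sigma>)" "0 < sinks_weight_open (last \<sigma>)"
    using ends by (simp_all add: sources_weight_open_pos sinks_weight_pos sources_weight_pos sinks_weight_open_pos)
  then show ?thesis
    using ends by (simp add: mfun_long_opath[OF assms] mfun_vertex_not_sink mfun_vertex_not_source)
qed

end

lemma W1plus_geodesic_continuity_flow:
  assumes "W1plus_geodesic adj f g h"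
  shows "continuity_flow (W1_arrow adj (f 0) (f 1)) f g h"
  using assms unfolding W1plus_geodesic_def Let_def fs_prob_def by unfold_locales auto

lemma W1plus_geodesic_W1_transport:
  assumes "conn_locfin_graph adj" "W1plus_geodesic adj f g h"
  shows "W1_transport adj (f 0) (f 1)"
  using assms unfolding W1plus_geodesic_def Let_def by unfold_locales auto

theorem proposition3p12:
  fixes adj :: "'v \<Rightarrow> 'v \<Rightarrow> bool"
    and f :: "real \<Rightarrow> 'v \<Rightarrow> real"
    and g :: "real \<Rightarrow> 'v \<Rightarrow> 'v \<Rightarrow> real"
    and h :: "real \<Rightarrow> 'v \<Rightarrow> 'v \<Rightarrow> 'v \<Rightarrow> real"
  assumes "conn_locfin_graph adj"
    and "W1plus_geodesic adj f g h"
  shows "\<forall>t\<in>{0..1}.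
    (let ar = W1_arrow adj (f 0) (f 1);
         m = mfun ar (f 0) (g 0);
         P = (\<lambda>x. (1 / m [x]) * (\<Sum>\<gamma>\<in>SE2 ar x. Cpath (f t) (g t) \<gamma>));
         Q = (\<lambda>x. (1 / m [x]) * (\<Sum>\<gamma>\<in>SE1 ar x. Cpath (f t) (g t) \<gamma>))
     in (\<forall>x0. f t x0 = m [x0] * P x0 * Q x0) \<and>
        (\<forall>x0 x1. ar x0 x1 \<longrightarrow> g t x0 x1 = m [x0, x1] * P x0 * Q x1) \<and>
        (\<forall>x0 x1 x2. ar x0 x1 \<and> ar x1 x2 \<longrightarrow>
            h t x0 x1 x2 = m [x0, x1, x2] * P x0 * Q x2))"
    (is "\<forall>t\<in>{0..1}. ?claim t")
proof
  fix t :: real assume t: "t \<in> {0..1}"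
  let ?ar = "W1_arrow adj (f 0) (f 1)"
  interpret continuity_flow ?ar f g h
    using W1plus_geodesic_continuity_flow[OF assms(2)] .
  interpret W1_transport adj "f 0" "f 1"
    using W1plus_geodesic_W1_transport[OF assms] .
  interpret w: path_weights ?ar "f t" "g t"
    using flux_pos[OF t] mass_pos[OF t] by unfold_locales
  have "h t x0 x1 x2 = Cpath (f t) (g t) [x0, x1, x2]" if "?ar x0 x1" "?ar x1 x2" for x0 x1 x2
    using triple_flux_eq[OF t that] by (simp add: Cpath_Cons)
  then show "?claim t"
    unfolding Let_def mfun_time_invariant[OF t, symmetric]
      w.sources_weight_def[symmetric] w.sinks_weight_def[symmetric]
    using w.mass_factorization w.Cpath_factorization[where \<sigma> = "[x0, x1]" for x0 x1]
      w.Cpath_factorization[where \<sigma> = "[x0, x1, x2]" for x0 x1 x2]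
    by simp
qed

end
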